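(* Let $\mathcal{A}$ be a complex Banach algebra with unity, $a,b\in\mathcal{A}$ and $k$ a positive integer, and suppose $\alpha_{1}\cdots\alpha_{k}ab=\alpha_{1}\cdots\alpha_{k}ba$ for all $\alpha_{1},\dots,\alpha_{k}\in\{a,b\}$. Then: (1) if $a\in\mathcal{A}^{qnil}$ (or $b\in\mathcal{A}^{qnil}$), then $ab\in\mathcal{A}^{qnil}$; (2) if $a\in\mathcal{A}^{qnil}$, then $b\in\mathcal{A}^{qnil}$ if and only if $a+b\in\mathcal{A}^{qnil}$; (3) if $a$ and $b$ are g$\pi$-Hirano invertible, then $ab$ is g$\pi$-Hirano invertible; (4) if $a\in\mathcal{A}^{qnil}$ and $b$ is g$\pi$-Hirano invertible, then $a+b$ is g$\pi$-Hirano invertible.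
   Context: $\mathcal{A}^{qnil}$ denotes the set of quasinilpotent elements of $\mathcal{A}$ (spectrum equal to $\{0\}$). An element $a\in\mathcal{A}$ is g$\pi$-Hirano invertible if there exists $x\in\mathcal{A}$ with $xax=x$, $ax=xa$ and $a-a^{n+2}x\in\mathcal{A}^{qnil}$ for some positive integer $n$. *)

theory Defs
  imports "HOL-Analysis.Analysis"
begin

class complex_banach_algebra_1 = banach + real_normed_algebra_1 +
  fixes cscale :: "complex \<Rightarrow> 'a \<Rightarrow> 'a"
  assumes cscale_of_real: "cscale (complex_of_real r) x = scaleR r x"
    and cscale_add_right: "cscale c (x + y) = cscale c x + cscale c y"
    and cscale_add_left: "cscale (c + d) x = cscale c x + cscale d x"
    and cscale_cscale: "cscale c (cscale d x) = cscale (c * d) x"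
    and norm_cscale: "norm (cscale c x) = cmod c * norm x"
    and cscale_mult_left: "cscale c (x * y) = cscale c x * y"
    and cscale_mult_right: "cscale c (x * y) = x * cscale c y"

instantiation complex :: complex_banach_algebra_1
begin
definition cscale_complex :: "complex \<Rightarrow> complex \<Rightarrow> complex" where
  "cscale_complex c x = c * x"
instance
  by standard (auto simp: cscale_complex_def algebra_simps norm_mult scaleR_conv_of_real)
end

definition invertible_el :: "'a::ring_1 \<Rightarrow> bool" where
  "invertible_el x \<longleftrightarrow> (\<exists>y. x * y = 1 \<and> y * x = 1)"

definition cspectrum :: "'a::complex_banach_algebra_1 \<Rightarrow> complex set" where
  "cspectrum a = {z. \<not> invertible_el (cscale z 1 - a)}"

definition quasinilpotent :: "'a::complex_banach_algebra_1 \<Rightarrow> bool" where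
  "quasinilpotent a \<longleftrightarrow> cspectrum a = {0}"

definition gpi_Hirano_invertible :: "'a::complex_banach_algebra_1 \<Rightarrow> bool" where
  "gpi_Hirano_invertible a \<longleftrightarrow>
     (\<exists>x. x * a * x = x \<and> a * x = x * a \<and>
          (\<exists>n::nat. n > 0 \<and> quasinilpotent (a - a ^ (n + 2) * x)))"

end

theory Submission
  imports Defs "HOL-Computational_Algebra.Formal_Power_Series"
begin

text \<open>Everything is reduced to topological nilpotence: \<open>t\<^sup>n \<parallel>x\<^sup>n\<parallel>\<close> stays bounded for every
  \<open>t > 0\<close>. This is equivalent to quasinilpotence (Neumann series in one direction, Rickart's
  elementary argument in the other), and \<open>e\<close> is g\<open>\<pi>\<close>-Hirano invertible iff \<open>e - e\<^sup>n\<^sup>+\<^sup>1\<close> is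
  topologically nilpotent for some \<open>n > 0\<close>, the inner inverse coming from the spectral idempotent
  of \<open>e\<^sup>n\<close>, which is built from the binomial series of \<open>(1 - 4 (g - g\<^sup>2))\<^sup>-\<^sup>1\<^sup>/\<^sup>2\<close>.

  Call \<open>P\<close> a commuting prefix if \<open>P u a b = P u b a\<close> for all \<open>u\<close> in the unital ring generated
  by \<open>a\<close> and \<open>b\<close>. Every word of length at least \<open>k\<close> in \<open>a, b\<close> is one, hence so is \<open>f\<^sup>k\<close> for
  \<open>f = a u + b v\<close>, and behind a commuting prefix all elements of that ring commute. So
  \<open>f\<^sup>k\<^sup>+\<^sup>j = f\<^sup>k g\<^sup>j\<close> for any \<open>g\<close> that agrees with \<open>f\<close> behind commuting prefixes, and for
  \<open>g = s \<beta> + \<gamma> r\<close> the powers expand binomially as in the commutative case; the four claims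
  follow by choosing \<open>f\<close> and \<open>g\<close> suitably.\<close>

section \<open>Complex scalars, inverses and the Neumann series\<close>

definition of_complex :: "complex \<Rightarrow> 'a::complex_banach_algebra_1" where
  "of_complex c = cscale c 1"

lemma cscale_eq_of_complex_mult: "cscale c x = of_complex c * x"
  unfolding of_complex_def using cscale_mult_left[of c 1 x] by simp

lemma of_complex_commute: "of_complex c * x = x * of_complex c"
  unfolding of_complex_def using cscale_mult_left[of c 1 x] cscale_mult_right[of c x 1] by simp

lemma of_complex_add: "of_complex (c + d) = of_complex c + of_complex d"
  unfolding of_complex_def by (simp add: cscale_add_left)

lemma of_complex_mult: "of_complex (c * d) = of_complex c * of_complex d"
  unfolding of_complex_def using cscale_cscale[of c d 1] cscale_mult_left[of c 1 "cscale d 1"]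
  by (metis mult_1_left)

lemma of_complex_of_real: "of_complex (complex_of_real r) = of_real r"
  unfolding of_complex_def using cscale_of_real[of r "1::'a"] by (simp only: of_real_def)

lemma of_complex_0 [simp]: "of_complex 0 = 0"
  using of_complex_of_real[of 0] by simp

lemma of_complex_1 [simp]: "of_complex 1 = 1"
  using of_complex_of_real[of 1] by simp

lemma norm_of_complex_mult: "norm (of_complex c * x) = cmod c * norm x"
  by (metis cscale_eq_of_complex_mult norm_cscale)

lemma norm_of_complex [simp]: "norm (of_complex c) = cmod c"
  using norm_of_complex_mult[of c 1] by simp

lemma of_complex_minus: "of_complex (- c) = - of_complex c"
  using of_complex_add[of "- c" c] by (simp add: eq_neg_iff_add_eq_0)

lemma of_complex_diff: "of_complex (c - d) = of_complex c - of_complex d"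
  by (simp only: diff_conv_add_uminus of_complex_add of_complex_minus)

lemma of_complex_sum: "of_complex (sum f A) = (\<Sum>i\<in>A. of_complex (f i))"
  by (induction A rule: infinite_finite_induct) (simp_all add: of_complex_add)

lemma power_of_complex_mult: "(of_complex c * x) ^ n = of_complex (c ^ n) * x ^ n"
proof (induction n)
  case (Suc n)
  have "(of_complex c * x) ^ Suc n = of_complex c * (x * of_complex (c ^ n)) * x ^ n"
    by (simp add: Suc mult.assoc)
  also have "\<dots> = of_complex (c ^ Suc n) * x ^ Suc n"
    by (simp add: of_complex_commute[of _ x, symmetric] of_complex_mult mult.assoc)
  finally show ?case .
qed simp

lemma invertible_el_mult:
  assumes "invertible_el x" "invertible_el y"
  shows "invertible_el (x * y)"
proof -
  obtain x' where x: "x * x' = 1" "x' * x = 1" using assms(1) unfolding invertible_el_def by blast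
  obtain y' where y: "y * y' = 1" "y' * y = 1" using assms(2) unfolding invertible_el_def by blast
  have "x * y * (y' * x') = 1" by (metis x(1) y(1) mult.assoc mult_1_left)
  moreover have "y' * x' * (x * y) = 1" by (metis x(2) y(2) mult.assoc mult_1_left)
  ultimately show ?thesis unfolding invertible_el_def by blast
qed

lemma invertible_el_minus_iff: "invertible_el (- x) \<longleftrightarrow> invertible_el x"
  unfolding invertible_el_def by (metis minus_mult_minus minus_mult_left minus_mult_right)

lemma invertible_el_of_complex: "c \<noteq> 0 \<Longrightarrow> invertible_el (of_complex c)"
  unfolding invertible_el_def
  by (rule exI[of _ "of_complex (inverse c)"]) (simp flip: of_complex_mult)

lemma neumann_series:
  fixes z :: "'a::{banach, real_normed_algebra_1}"
  assumes "summable (\<lambda>j. norm (z ^ j))"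
  shows "(1 - z) * (\<Sum>j. z ^ j) = 1" and "(\<Sum>j. z ^ j) * (1 - z) = 1"
proof -
  have s: "summable (\<lambda>j. z ^ j)" using assms summable_norm_cancel by blast
  have tail: "(\<Sum>j. z ^ Suc j) = (\<Sum>j. z ^ j) - 1"
    using suminf_split_head[OF s] by simp
  have "z * (\<Sum>j. z ^ j) = (\<Sum>j. z ^ j) - 1"
    using suminf_mult[OF s, of z] tail by simp
  then show "(1 - z) * (\<Sum>j. z ^ j) = 1" by (simp add: algebra_simps)
  have "(\<Sum>j. z ^ j) * z = (\<Sum>j. z ^ j) - 1"
    using suminf_mult2[OF s, of z] tail by (simp add: power_commutes)
  then show "(\<Sum>j. z ^ j) * (1 - z) = 1" by (simp add: algebra_simps)
qed

lemma invertible_el_one_minus: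
  fixes z :: "'a::{banach, real_normed_algebra_1}"
  shows "summable (\<lambda>j. norm (z ^ j)) \<Longrightarrow> invertible_el (1 - z)"
  using neumann_series unfolding invertible_el_def by blast

section \<open>Topological nilpotence\<close>

definition subexponential :: "(nat \<Rightarrow> real) \<Rightarrow> bool" where
  "subexponential A \<longleftrightarrow> (\<forall>t>0. \<exists>C. \<forall>n. t ^ n * A n \<le> C)"

definition topologically_nilpotent :: "'a::real_normed_algebra_1 \<Rightarrow> bool" where
  "topologically_nilpotent x \<longleftrightarrow> subexponential (\<lambda>n. norm (x ^ n))"

lemma subexponential_le:
  assumes "subexponential A" "\<And>n. B n \<le> A n"
  shows "subexponential B"
  unfolding subexponential_def
proof (intro allI impI)
  fix t :: real assume "t > 0"
  then obtain C where "\<And>n. t ^ n * A n \<le> C" using assms(1) unfolding subexponential_def by blast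
  moreover have "t ^ n * B n \<le> t ^ n * A n" for n
    using \<open>t > 0\<close> assms(2) by (intro mult_left_mono) auto
  ultimately have "t ^ n * B n \<le> C" for n
    by (meson order_trans)
  then show "\<exists>C. \<forall>n. t ^ n * B n \<le> C" by blast
qed

lemma subexponential_le_power_mult:
  assumes "subexponential A" "\<And>n. 0 \<le> A n" "c \<ge> 0" "\<And>n. B n \<le> c ^ n * A n"
  shows "subexponential B"
  unfolding subexponential_def
proof (intro allI impI)
  fix t :: real assume t: "t > 0"
  then obtain C where C: "\<And>n. (t * (c + 1)) ^ n * A n \<le> C"
    using assms(1,3) unfolding subexponential_def by (metis add_nonneg_pos mult_pos_pos zero_less_one)
  have "t ^ n * B n \<le> C" for n
  proof -
    have "t ^ n * B n \<le> (t * c) ^ n * A n"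
      using mult_left_mono[OF assms(4)[of n], of "t ^ n"] t by (simp add: power_mult_distrib mult.assoc)
    also have "\<dots> \<le> (t * (c + 1)) ^ n * A n"
      using t assms(2,3) by (intro mult_right_mono power_mono) auto
    finally show ?thesis using C[of n] by linarith
  qed
  then show "\<exists>C. \<forall>n. t ^ n * B n \<le> C" by blast
qed

lemma subexponential_cmult:
  assumes "subexponential A" "c \<ge> 0"
  shows "subexponential (\<lambda>n. c * A n)"
  unfolding subexponential_def
proof (intro allI impI)
  fix t :: real assume "t > 0"
  then obtain C where "\<And>n. t ^ n * A n \<le> C" using assms(1) unfolding subexponential_def by blast
  then have "t ^ n * (c * A n) \<le> c * C" for n
    using mult_left_mono[of _ C c] assms(2) by (simp add: mult.left_commute)
  then show "\<exists>C. \<forall>n. t ^ n * (c * A n) \<le> C" by blast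
qed

lemma subexponential_shift:
  assumes "subexponential (\<lambda>n. A (m + n))" "\<And>n. 0 \<le> A n"
  shows "subexponential A"
  unfolding subexponential_def
proof (intro allI impI)
  fix t :: real assume t: "t > 0"
  then obtain C where C: "\<And>n. t ^ n * A (m + n) \<le> C"
    using assms(1) unfolding subexponential_def by blast
  define D where "D = t ^ m * C + (\<Sum>i<m. t ^ i * A i)"
  have C0: "C \<ge> 0" using C[of 0] assms(2)[of m] by simp
  have head: "0 \<le> (\<Sum>i<m. t ^ i * A i)" using t assms(2) by (intro sum_nonneg) simp
  have "t ^ i * A i \<le> D" for i
  proof (cases "i < m")
    case True
    then have "t ^ i * A i \<le> (\<Sum>i<m. t ^ i * A i)"
      by (intro member_le_sum) (use t assms(2) in auto)
    moreover have "0 \<le> t ^ m * C" using t C0 by simp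
    ultimately show ?thesis unfolding D_def by linarith
  next
    case False
    then obtain j where i: "i = m + j" using le_Suc_ex not_less by blast
    have "t ^ i * A i = t ^ m * (t ^ j * A (m + j))" by (simp add: i power_add mult.assoc)
    also have "\<dots> \<le> t ^ m * C" using C[of j] t by (intro mult_left_mono) auto
    finally show ?thesis unfolding D_def using head by linarith
  qed
  then show "\<exists>C. \<forall>n. t ^ n * A n \<le> C" by blast
qed

lemma subexponential_binomial_convolution:
  assumes "subexponential A" "subexponential B" "\<And>n. 0 \<le> A n" "\<And>n. 0 \<le> B n"
  shows "subexponential (\<lambda>n. \<Sum>i\<le>n. real (n choose i) * (A i * B (n - i)))"
  unfolding subexponential_def
proof (intro allI impI)
  fix t :: real assume t: "t > 0"
  obtain CA where CA: "\<And>i. (2 * t) ^ i * A i \<le> CA"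
    using assms(1) t unfolding subexponential_def by (meson mult_pos_pos zero_less_numeral)
  obtain CB where CB: "\<And>i. (2 * t) ^ i * B i \<le> CB"
    using assms(2) t unfolding subexponential_def by (meson mult_pos_pos zero_less_numeral)
  have CA0: "CA \<ge> 0" using CA[of 0] assms(3)[of 0] by simp
  have "t ^ n * (\<Sum>i\<le>n. real (n choose i) * (A i * B (n - i))) \<le> CA * CB" for n
  proof -
    have split: "t ^ n * (real (n choose i) * (A i * B (n - i)))
        = real (n choose i) * (((2 * t) ^ i * A i) * ((2 * t) ^ (n - i) * B (n - i))) / 2 ^ n"
      if "i \<le> n" for i
    proof -
      have "(2 * t) ^ i * (2 * t) ^ (n - i) = (2 * t) ^ n"
        using that by (metis le_add_diff_inverse power_add)
      then have "(2 * t) ^ i * (2 * t) ^ (n - i) = 2 ^ n * t ^ n"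
        by (simp only: power_mult_distrib)
      then show ?thesis by (simp add: field_simps)
    qed
    have "t ^ n * (\<Sum>i\<le>n. real (n choose i) * (A i * B (n - i)))
        = (\<Sum>i\<le>n. real (n choose i) * (((2 * t) ^ i * A i) * ((2 * t) ^ (n - i) * B (n - i)))) / 2 ^ n"
      by (simp add: sum_distrib_left sum_divide_distrib split)
    also have "\<dots> \<le> (\<Sum>i\<le>n. real (n choose i) * (CA * CB)) / 2 ^ n"
      using t assms(3,4) CA CB CA0
      by (intro divide_right_mono sum_mono mult_left_mono mult_mono) auto
    also have "\<dots> = CA * CB"
      by (simp flip: sum_distrib_right of_nat_sum add: choose_row_sum)
    finally show ?thesis .
  qed
  then show "\<exists>C. \<forall>n. t ^ n * (\<Sum>i\<le>n. real (n choose i) * (A i * B (n - i))) \<le> C" by blast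
qed

lemma topologically_nilpotent_summable:
  assumes "topologically_nilpotent x" "t > 0"
  shows "summable (\<lambda>n. t ^ n * norm (x ^ n))"
proof -
  obtain C where C: "\<And>n. (2 * t) ^ n * norm (x ^ n) \<le> C"
    using assms unfolding topologically_nilpotent_def subexponential_def
    by (meson mult_pos_pos zero_less_numeral)
  show ?thesis
  proof (rule summable_comparison_test)
    show "\<exists>N. \<forall>n\<ge>N. norm (t ^ n * norm (x ^ n)) \<le> C * (1 / 2) ^ n"
    proof (intro exI allI impI)
      fix n :: nat
      have "t ^ n * norm (x ^ n) = ((2 * t) ^ n * norm (x ^ n)) * (1 / 2) ^ n"
        by (simp add: field_simps)
      also have "\<dots> \<le> C * (1 / 2) ^ n" using C[of n] by (intro mult_right_mono) auto
      finally show "norm (t ^ n * norm (x ^ n)) \<le> C * (1 / 2) ^ n" using assms(2) by simp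
    qed
    show "summable (\<lambda>n. C * (1 / 2) ^ n)" by (intro summable_mult summable_geometric) simp
  qed
qed

lemma topologically_nilpotent_0: "topologically_nilpotent 0"
  unfolding topologically_nilpotent_def subexponential_def
proof (intro allI impI exI[of _ 1])
  show "t ^ n * norm (0 ^ n :: 'a) \<le> 1" for t :: real and n by (cases n) simp_all
qed

lemma topologically_nilpotent_minus:
  assumes "topologically_nilpotent x"
  shows "topologically_nilpotent (- x)"
proof -
  have "norm ((- x) ^ n) = norm (x ^ n)" for n
    by (cases "even n") simp_all
  then show ?thesis using assms unfolding topologically_nilpotent_def by simp
qed

lemma power_mult_commuting:
  fixes x y :: "'a::monoid_mult"
  assumes "x * y = y * x"
  shows "(x * y) ^ n = x ^ n * y ^ n"
proof (induction n)
  case (Suc n)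
  have "(x * y) ^ Suc n = x * (y * x ^ n) * y ^ n" by (simp add: Suc mult.assoc)
  also have "y * x ^ n = x ^ n * y" by (rule power_commuting_commutes[OF assms, symmetric])
  also have "x * (x ^ n * y) * y ^ n = x ^ Suc n * y ^ Suc n" by (simp add: mult.assoc)
  finally show ?case .
qed simp

lemma topologically_nilpotent_mult_commuting:
  assumes "x * y = y * x" "topologically_nilpotent x"
  shows "topologically_nilpotent (x * y)"
  using assms(2) unfolding topologically_nilpotent_def
proof (rule subexponential_le_power_mult)
  fix n
  have "norm ((x * y) ^ n) \<le> norm (x ^ n) * norm (y ^ n)"
    unfolding power_mult_commuting[OF assms(1)] by (rule norm_mult_ineq)
  also have "\<dots> \<le> norm (x ^ n) * norm y ^ n" by (intro mult_left_mono norm_power_ineq) simp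
  finally show "norm ((x * y) ^ n) \<le> norm y ^ n * norm (x ^ n)" by (simp add: mult.commute)
qed auto

lemma prefixed_binomial:
  fixes P x y :: "'a::ring_1"
  assumes swap: "\<And>i m. P * x ^ i * y ^ m * x = P * x ^ Suc i * y ^ m"
  shows "P * (x + y) ^ n = (\<Sum>i\<le>n. of_nat (n choose i) * (P * x ^ i * y ^ (n - i)))"
proof (induction n)
  case (Suc n)
  define F where "F i m = P * x ^ i * y ^ m" for i m
  have IH: "P * (x + y) ^ n = (\<Sum>i\<le>n. of_nat (n choose i) * F i (n - i))"
    using Suc unfolding F_def .
  have "P * (x + y) ^ Suc n = P * (x + y) ^ n * x + P * (x + y) ^ n * y"
    by (simp only: power_Suc2 mult.assoc distrib_left)
  also have "P * (x + y) ^ n * x = (\<Sum>i\<le>n. of_nat (n choose i) * F (Suc i) (n - i))"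
    unfolding IH sum_distrib_right by (simp add: mult.assoc swap[folded F_def mult.assoc])
  also have "P * (x + y) ^ n * y = (\<Sum>i\<le>Suc n. of_nat (n choose i) * F i (Suc n - i))"
    unfolding IH sum_distrib_right
    by (simp add: F_def mult.assoc Suc_diff_le binomial_eq_0 flip: power_Suc2)
  also have "\<dots> = F 0 (Suc n) + (\<Sum>i\<le>n. of_nat (n choose Suc i) * F (Suc i) (n - i))"
    by (subst sum.atMost_Suc_shift) simp
  finally have "P * (x + y) ^ Suc n
      = F 0 (Suc n) + (\<Sum>i\<le>n. of_nat (Suc n choose Suc i) * F (Suc i) (Suc n - Suc i))"
    by (simp add: sum.distrib algebra_simps)
  also have "\<dots> = (\<Sum>i\<le>Suc n. of_nat (Suc n choose i) * F i (Suc n - i))"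
    by (simp only: sum.atMost_Suc_shift) simp
  finally show ?case unfolding F_def .
qed simp

lemma topologically_nilpotent_add_commuting:
  assumes xy: "x * y = y * x" and "topologically_nilpotent x" "topologically_nilpotent y"
  shows "topologically_nilpotent (x + y)"
  using subexponential_binomial_convolution[OF assms(2,3)[unfolded topologically_nilpotent_def]]
  unfolding topologically_nilpotent_def
proof (rule subexponential_le)
  fix n
  have swap: "1 * x ^ i * y ^ m * x = 1 * x ^ Suc i * y ^ m" for i m
    using power_commuting_commutes[OF xy[symmetric], of m]
    by (simp only: mult_1_left mult.assoc power_Suc2)
  have "norm ((x + y) ^ n) = norm (\<Sum>i\<le>n. of_nat (n choose i) * (1 * x ^ i * y ^ (n - i)))"
    using prefixed_binomial[OF swap, of n] by simp
  also have "\<dots> \<le> (\<Sum>i\<le>n. norm (of_nat (n choose i) * (x ^ i * y ^ (n - i))))"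
    by (simp add: norm_sum)
  also have "\<dots> \<le> (\<Sum>i\<le>n. real (n choose i) * (norm (x ^ i) * norm (y ^ (n - i))))"
    by (intro sum_mono order_trans[OF norm_mult_ineq]) (simp add: mult_left_mono norm_mult_ineq)
  finally show "norm ((x + y) ^ n) \<le> (\<Sum>i\<le>n. real (n choose i) * (norm (x ^ i) * norm (y ^ (n - i))))" .
qed auto

lemma topologically_nilpotent_of_power:
  assumes n: "n > 0" and "topologically_nilpotent (z ^ n)"
  shows "topologically_nilpotent z"
  unfolding topologically_nilpotent_def subexponential_def
proof (intro allI impI)
  fix t :: real assume t: "t > 0"
  then obtain C where C: "\<And>j. (t ^ n) ^ j * norm ((z ^ n) ^ j) \<le> C"
    using assms(2) unfolding topologically_nilpotent_def subexponential_def
    by (meson zero_less_power)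
  have C0: "C \<ge> 0" using C[of 0] by simp
  define D where "D = (1 + t * norm z) ^ n"
  have "t ^ i * norm (z ^ i) \<le> D * C" for i
  proof -
    define q r where "q = i div n" and "r = i mod n"
    have i: "i = r + n * q" and r: "r < n" unfolding q_def r_def using n by simp_all
    have "norm (z ^ i) \<le> norm z ^ r * norm ((z ^ n) ^ q)"
      unfolding i power_add power_mult
      by (metis mult_right_mono norm_ge_zero norm_mult_ineq norm_power_ineq order_trans)
    then have "t ^ i * norm (z ^ i) \<le> t ^ i * (norm z ^ r * norm ((z ^ n) ^ q))"
      using t by (intro mult_left_mono) auto
    also have "\<dots> = (t * norm z) ^ r * ((t ^ n) ^ q * norm ((z ^ n) ^ q))"
      by (simp add: i power_add power_mult power_mult_distrib mult_ac)
    also have "\<dots> \<le> D * C"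
    proof (rule mult_mono)
      have "(t * norm z) ^ r \<le> (1 + t * norm z) ^ r" using t by (intro power_mono) auto
      also have "\<dots> \<le> D" unfolding D_def using r t by (intro power_increasing) auto
      finally show "(t * norm z) ^ r \<le> D" .
    qed (use C C0 t in \<open>auto simp: D_def\<close>)
    finally show ?thesis .
  qed
  then show "\<exists>C. \<forall>i. t ^ i * norm (z ^ i) \<le> C" by blast
qed

section \<open>Quasinilpotent elements are topologically nilpotent\<close>

lemma not_invertible_if_topologically_nilpotent:
  fixes a :: "'a::real_normed_algebra_1"
  assumes tn: "topologically_nilpotent a"
  shows "\<not> invertible_el a"
proof
  assume "invertible_el a"
  then obtain y where "a * y = 1" unfolding invertible_el_def by blast
  have "1 \<le> (norm y + 1) ^ j * norm (a ^ j)" for j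
  proof -
    have "1 = norm (a ^ j * y ^ j)" using \<open>a * y = 1\<close> by (simp add: left_right_inverse_power)
    also have "\<dots> \<le> norm (a ^ j) * norm (y ^ j)" by (rule norm_mult_ineq)
    also have "\<dots> \<le> norm (a ^ j) * (norm y + 1) ^ j"
      by (intro mult_left_mono order_trans[OF norm_power_ineq] power_mono) auto
    finally show ?thesis by (simp add: mult.commute)
  qed
  moreover have "(\<lambda>j. (norm y + 1) ^ j * norm (a ^ j)) \<longlonglongrightarrow> 0"
    using topologically_nilpotent_summable[OF tn, of "norm y + 1"]
    by (intro summable_LIMSEQ_zero) (simp add: add_nonneg_pos)
  ultimately have "1 \<le> (0::real)" by (intro LIMSEQ_le_const) auto
  then show False by simp
qed

lemma topologically_nilpotent_imp_quasinilpotent: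
  fixes a :: "'a::complex_banach_algebra_1"
  assumes tn: "topologically_nilpotent a"
  shows "quasinilpotent a"
proof -
  have "lam \<notin> cspectrum a" if "lam \<noteq> 0" for lam
  proof -
    let ?z = "of_complex (inverse lam) * a"
    have "summable (\<lambda>j. (inverse (cmod lam)) ^ j * norm (a ^ j))"
      using topologically_nilpotent_summable[OF tn] that by simp
    moreover have "norm (?z ^ j) = (inverse (cmod lam)) ^ j * norm (a ^ j)" for j
      by (simp add: power_of_complex_mult norm_of_complex_mult norm_power norm_inverse)
    ultimately have "invertible_el (1 - ?z)"
      by (intro invertible_el_one_minus) simp
    then have "invertible_el (of_complex lam * (1 - ?z))"
      using invertible_el_of_complex[OF that] invertible_el_mult by blast
    moreover have "of_complex lam * (1 - ?z) = of_complex lam - a"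
      using that by (simp add: algebra_simps flip: mult.assoc of_complex_mult)
    ultimately show ?thesis unfolding cspectrum_def by (simp add: cscale_eq_of_complex_mult)
  qed
  moreover have "0 \<in> cspectrum a"
    using not_invertible_if_topologically_nilpotent[OF tn]
    unfolding cspectrum_def by (simp add: cscale_eq_of_complex_mult invertible_el_minus_iff)
  ultimately show ?thesis unfolding quasinilpotent_def by auto
qed

definition root_unity :: "nat \<Rightarrow> complex" where
  "root_unity n = cis (2 * pi / real n)"

lemma root_unity_power: "root_unity n ^ j = cis (2 * pi * real j / real n)"
  unfolding root_unity_def Complex.DeMoivre by (simp add: mult.commute)

lemma root_unity_power_self: "n > 0 \<Longrightarrow> root_unity n ^ n = 1"
  unfolding root_unity_power by simp

lemma norm_root_unity [simp]: "cmod (root_unity n) = 1"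
  unfolding root_unity_def by simp

lemma root_unity_power_neq_1:
  assumes "0 < j" "j < n"
  shows "root_unity n ^ j \<noteq> 1"
proof -
  have inj: "inj_on (\<lambda>k. cis (2 * pi * real k / real n)) {..<n}"
    using Complex.bij_betw_roots_unity[of n] assms unfolding bij_betw_def by simp
  show ?thesis
  proof
    assume "root_unity n ^ j = 1"
    then have "cis (2 * pi * real j / real n) = cis (2 * pi * real 0 / real n)"
      unfolding root_unity_power by simp
    then show False using inj_onD[OF inj] assms by fastforce
  qed
qed

lemma sum_root_unity_powers:
  assumes "j < n"
  shows "(\<Sum>k<n. (root_unity n ^ j) ^ k) = (if j = 0 then of_nat n else 0)"
proof (cases "j = 0")
  case False
  have "(root_unity n ^ j) ^ n = (root_unity n ^ n) ^ j"
    by (simp only: power_mult[symmetric] mult.commute)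
  then have "(root_unity n ^ j) ^ n = 1"
    using root_unity_power_self[of n] assms by simp
  then show ?thesis
    using geometric_sum[OF root_unity_power_neq_1, of j n] False assms by simp
qed simp

lemma one_minus_mult_geometric_sum: "(1 - z) * (\<Sum>j<n. z ^ j) = 1 - (z::'a::ring_1) ^ n"
proof (induction n)
  case (Suc n)
  have "(1 - z) * (\<Sum>j<Suc n. z ^ j) = (1 - z) * (\<Sum>j<n. z ^ j) + (1 - z) * z ^ n"
    by (simp add: distrib_left)
  also have "\<dots> = 1 - z ^ Suc n" using Suc by (simp add: algebra_simps)
  finally show ?case .
qed simp

lemma bounded_above_if_eventually:
  fixes X :: "nat \<Rightarrow> real"
  assumes "\<forall>\<^sub>F n in sequentially. X n \<le> B"
  shows "\<exists>C. \<forall>n. X n \<le> C"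
proof -
  obtain N where N: "\<And>n. n \<ge> N \<Longrightarrow> X n \<le> B"
    using assms unfolding eventually_sequentially by blast
  have "X n \<le> max B (Max (X ` {..<N}))" for n
    using N[of n] by (cases "n < N") (auto simp: le_max_iff_disj)
  then show ?thesis by blast
qed

lemma powers_decay:
  fixes a :: "'a::real_normed_algebra_1"
  assumes bound: "\<And>n. r1 ^ n * norm (a ^ n) \<le> C" and "0 \<le> r2" "r2 < r1"
  shows "(\<lambda>n. r2 ^ n * norm (a ^ n)) \<longlonglongrightarrow> 0"
proof (rule Lim_null_comparison)
  have r1: "r1 > 0" using assms by linarith
  show "\<forall>\<^sub>F n in sequentially. norm (r2 ^ n * norm (a ^ n)) \<le> C * (r2 / r1) ^ n"
  proof (intro always_eventually allI)
    fix n
    have "r2 ^ n * norm (a ^ n) = (r2 / r1) ^ n * (r1 ^ n * norm (a ^ n))"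
      using r1 by (simp add: power_divide)
    also have "\<dots> \<le> (r2 / r1) ^ n * C" using bound r1 assms by (intro mult_left_mono) auto
    finally show "norm (r2 ^ n * norm (a ^ n)) \<le> C * (r2 / r1) ^ n"
      using assms by (simp add: mult_ac)
  qed
  show "(\<lambda>n. C * (r2 / r1) ^ n) \<longlonglongrightarrow> 0"
    using r1 assms by (intro tendsto_mult_right_zero LIMSEQ_power_zero) simp
qed

lemma norm_le_one_if_inverse_near_one:
  fixes h x :: "'a::real_normed_algebra_1"
  assumes "h * (1 - x) = 1" "norm (h - 1) \<le> 1 / 2"
  shows "norm x \<le> 1"
proof -
  have "x = (h - 1) - (h - 1) * x" using assms(1) by (simp add: algebra_simps)
  then have "norm x \<le> norm (h - 1) + norm (h - 1) * norm x"
    by (metis norm_mult_ineq norm_triangle_ineq4 order_trans add_left_mono)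
  also have "\<dots> \<le> 1 / 2 + 1 / 2 * norm x"
    using assms(2) by (intro add_mono mult_right_mono) auto
  finally show ?thesis by simp
qed

text \<open>Rickart's elementary proof that the spectral radius of a quasinilpotent element vanishes:
  averaging the inverses of \<open>1 - \<omega>\<^sup>k \<lambda> a\<close> over the \<open>n\<close>-th roots of unity \<open>\<omega>\<^sup>k\<close> inverts
  \<open>1 - \<lambda>\<^sup>n a\<^sup>n\<close> with a bound independent of \<open>n\<close>, and a continuity argument then moves the
  radius \<open>r\<close> with \<open>r\<^sup>n \<parallel>a\<^sup>n\<parallel>\<close> bounded outwards in steps of fixed size.\<close>

locale spectrum_in_zero =
  fixes a :: "'a::complex_banach_algebra_1"
  assumes cspectrum_subset: "cspectrum a \<subseteq> {0}"
begin

lemma invertible_one_minus_mult: "invertible_el (1 - of_complex lam * a)"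
proof (cases "lam = 0")
  case True
  then show ?thesis unfolding invertible_el_def by (intro exI[of _ 1]) simp
next
  case False
  then have "invertible_el (of_complex (inverse lam) - a)"
    using cspectrum_subset unfolding cspectrum_def by (auto simp: cscale_eq_of_complex_mult)
  moreover have "1 - of_complex lam * a = of_complex lam * (of_complex (inverse lam) - a)"
    using False by (simp add: algebra_simps flip: mult.assoc of_complex_mult)
  ultimately show ?thesis using invertible_el_mult[OF invertible_el_of_complex[OF False]] False
    by simp
qed

text \<open>Parametrised as \<open>(1 - \<lambda> a)\<^sup>-\<^sup>1\<close> rather than \<open>(\<lambda> - a)\<^sup>-\<^sup>1\<close>, so that it is defined
  (and continuous) on all of \<open>\<complex>\<close>.\<close>

definition resolvent :: "complex \<Rightarrow> 'a" where
  "resolvent lam = (SOME y. (1 - of_complex lam * a) * y = 1 \<and> y * (1 - of_complex lam * a) = 1)"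

lemma resolvent_right: "(1 - of_complex lam * a) * resolvent lam = 1"
  and resolvent_left: "resolvent lam * (1 - of_complex lam * a) = 1"
  using someI_ex[OF invertible_one_minus_mult[of lam, unfolded invertible_el_def]]
  unfolding resolvent_def by blast+

lemma resolvent_identity: "resolvent l - resolvent m = of_complex (l - m) * (resolvent l * a * resolvent m)"
proof -
  have "resolvent l - resolvent m
      = resolvent l * ((1 - of_complex m * a) * resolvent m)
        - (resolvent l * (1 - of_complex l * a)) * resolvent m"
    by (simp add: resolvent_left resolvent_right)
  also have "\<dots> = resolvent l * ((1 - of_complex m * a) - (1 - of_complex l * a)) * resolvent m"
    by (simp add: algebra_simps)
  also have "(1 - of_complex m * a) - (1 - of_complex l * a) = of_complex (l - m) * a"
    by (simp add: of_complex_diff algebra_simps)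
  also have "resolvent l * (of_complex (l - m) * a) * resolvent m
      = of_complex (l - m) * (resolvent l * a * resolvent m)"
    by (simp only: mult.assoc[symmetric] of_complex_commute[of "l - m" "resolvent l", symmetric])
  finally show ?thesis .
qed

lemma norm_resolvent_diff:
  "norm (resolvent l - resolvent m) \<le> cmod (l - m) * (norm (resolvent l) * norm a * norm (resolvent m))"
  unfolding resolvent_identity norm_of_complex_mult
  by (intro mult_left_mono order_trans[OF norm_mult_ineq] mult_right_mono norm_mult_ineq) simp_all

lemma norm_resolvent_le_twice:
  assumes "cmod (l - m) * norm a * norm (resolvent m) \<le> 1 / 2"
  shows "norm (resolvent l) \<le> 2 * norm (resolvent m)"
proof -
  have "norm (resolvent l) \<le> norm (resolvent m) + norm (resolvent l - resolvent m)"
    by (metis add.commute diff_add_cancel norm_triangle_ineq)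
  also have "norm (resolvent l - resolvent m)
      \<le> norm (resolvent l) * (cmod (l - m) * norm a * norm (resolvent m))"
    using norm_resolvent_diff[of l m] by (simp add: mult_ac)
  also have "\<dots> \<le> norm (resolvent l) * (1 / 2)" by (rule mult_left_mono[OF assms]) simp
  finally show ?thesis by simp
qed

lemma isCont_resolvent: "isCont resolvent m"
proof -
  define K where "K = norm a * norm (resolvent m)"
  have "((\<lambda>l. cmod (l - m) * K) \<longlongrightarrow> cmod (m - m) * K) (at m)"
    by (intro tendsto_intros)
  then have "((\<lambda>l. cmod (l - m) * K) \<longlongrightarrow> 0) (at m)" by simp
  then have "\<forall>\<^sub>F l in at m. cmod (l - m) * K < 1 / 2"
    by (rule order_tendstoD(2)) simp
  then have "\<forall>\<^sub>F l in at m. norm (resolvent l - resolvent m) \<le> cmod (l - m) * (2 * K * norm (resolvent m))"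
  proof (rule eventually_mono)
    fix l assume "cmod (l - m) * K < 1 / 2"
    then have "norm (resolvent l) \<le> 2 * norm (resolvent m)"
      by (intro norm_resolvent_le_twice) (simp add: K_def mult.assoc)
    then have "norm (resolvent l) * (norm a * norm (resolvent m))
        \<le> (2 * norm (resolvent m)) * (norm a * norm (resolvent m))"
      by (intro mult_right_mono) simp_all
    then have "norm (resolvent l) * norm a * norm (resolvent m) \<le> 2 * K * norm (resolvent m)"
      by (simp add: K_def mult_ac)
    then show "norm (resolvent l - resolvent m) \<le> cmod (l - m) * (2 * K * norm (resolvent m))"
      using norm_resolvent_diff[of l m] by (meson mult_left_mono norm_ge_zero order_trans)
  qed
  moreover have "((\<lambda>l. cmod (l - m) * (2 * K * norm (resolvent m)))
      \<longlongrightarrow> cmod (m - m) * (2 * K * norm (resolvent m))) (at m)"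
    by (intro tendsto_intros)
  then have "((\<lambda>l. cmod (l - m) * (2 * K * norm (resolvent m))) \<longlongrightarrow> 0) (at m)"
    by simp
  ultimately have "((\<lambda>l. resolvent l - resolvent m) \<longlongrightarrow> 0) (at m)"
    by (rule Lim_null_comparison)
  then show ?thesis unfolding isCont_def by (rule LIM_zero_cancel)
qed

lemma resolvent_bounded_on_disc:
  obtains M where "\<And>l. cmod l \<le> R \<Longrightarrow> norm (resolvent l) \<le> M"
proof -
  have "compact (resolvent ` cball 0 R)"
    by (intro compact_continuous_image continuous_at_imp_continuous_on isCont_resolvent ballI
        compact_cball)
  then obtain M where "\<And>y. y \<in> resolvent ` cball 0 R \<Longrightarrow> norm y \<le> M"
    using compact_imp_bounded bounded_iff by metis
  then show ?thesis using that[of M] by simp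
qed

lemma resolvent_mult_one_minus_power:
  "resolvent mu * (1 - (of_complex mu * a) ^ n) = (\<Sum>j<n. (of_complex mu * a) ^ j)"
  by (simp flip: one_minus_mult_geometric_sum add: mult.assoc[symmetric] resolvent_left)

definition avg_resolvent :: "nat \<Rightarrow> complex \<Rightarrow> 'a" where
  "avg_resolvent n lam = of_complex (1 / of_nat n) * (\<Sum>k<n. resolvent (root_unity n ^ k * lam))"

lemma avg_resolvent_inverse:
  assumes "n > 0"
  shows "avg_resolvent n lam * (1 - (of_complex lam * a) ^ n) = 1"
proof -
  have summand: "resolvent (root_unity n ^ k * lam) * (1 - (of_complex lam * a) ^ n)
      = (\<Sum>j<n. of_complex ((root_unity n ^ j) ^ k * lam ^ j) * a ^ j)" for k
  proof -
    define mu where "mu = root_unity n ^ k * lam"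
    have mu_power: "mu ^ j = (root_unity n ^ j) ^ k * lam ^ j" for j
      unfolding mu_def by (metis power_mult power_mult_distrib mult.commute)
    have "(root_unity n ^ n) ^ k = 1" using root_unity_power_self[OF assms] by simp
    then have "(of_complex lam * a) ^ n = (of_complex mu * a) ^ n"
      by (simp add: power_of_complex_mult mu_power)
    then have "resolvent mu * (1 - (of_complex lam * a) ^ n) = (\<Sum>j<n. (of_complex mu * a) ^ j)"
      by (simp only: resolvent_mult_one_minus_power)
    then show ?thesis unfolding mu_def[symmetric] by (simp add: power_of_complex_mult mu_power)
  qed
  have "(\<Sum>k<n. resolvent (root_unity n ^ k * lam)) * (1 - (of_complex lam * a) ^ n)
      = (\<Sum>k<n. \<Sum>j<n. of_complex ((root_unity n ^ j) ^ k * lam ^ j) * a ^ j)"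
    by (simp add: sum_distrib_right summand)
  also have "\<dots> = (\<Sum>j<n. \<Sum>k<n. of_complex ((root_unity n ^ j) ^ k * lam ^ j) * a ^ j)"
    by (rule sum.swap)
  also have "\<dots> = (\<Sum>j<n. of_complex ((\<Sum>k<n. (root_unity n ^ j) ^ k) * lam ^ j) * a ^ j)"
    by (simp add: sum_distrib_right of_complex_sum)
  also have "\<dots> = (\<Sum>j<n. if j = 0 then of_complex (of_nat n) else 0)"
    by (intro sum.cong refl) (simp add: sum_root_unity_powers)
  also have "\<dots> = of_complex (of_nat n)" using assms by simp
  finally show ?thesis
    using assms unfolding avg_resolvent_def by (simp add: mult.assoc flip: of_complex_mult)
qed

context
  fixes R M :: real
  assumes resolvent_bound: "\<And>l. cmod l \<le> R \<Longrightarrow> norm (resolvent l) \<le> M"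
begin

lemma resolvent_lipschitz_on_disc:
  assumes "cmod l \<le> R" "cmod m \<le> R"
  shows "norm (resolvent l - resolvent m) \<le> cmod (l - m) * (M * M * norm a)"
proof -
  have "M \<ge> 0" using resolvent_bound[OF assms(1)] norm_ge_zero order_trans by blast
  then have "norm (resolvent l) * norm a * norm (resolvent m) \<le> M * norm a * M"
    by (intro mult_mono mult_right_mono resolvent_bound assms) simp_all
  then have "norm (resolvent l) * norm a * norm (resolvent m) \<le> M * M * norm a"
    by (simp add: mult_ac)
  then show ?thesis
    using norm_resolvent_diff[of l m] by (meson mult_left_mono norm_ge_zero order_trans)
qed

lemma norm_avg_resolvent_le:
  assumes "n > 0" "cmod lam \<le> R"
  shows "norm (avg_resolvent n lam) \<le> M"
proof -
  have "norm (avg_resolvent n lam) \<le> (1 / real n) * (\<Sum>k<n. norm (resolvent (root_unity n ^ k * lam)))"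
    unfolding avg_resolvent_def norm_of_complex_mult
    by (simp add: norm_divide norm_sum divide_right_mono)
  also have "\<dots> \<le> (1 / real n) * (\<Sum>k<n. M)"
    using assms by (intro mult_left_mono sum_mono resolvent_bound) (auto simp: norm_mult norm_power)
  finally show ?thesis using assms by simp
qed

lemma norm_avg_resolvent_diff_le:
  assumes "n > 0" "cmod lam \<le> R" "cmod mu \<le> R"
  shows "norm (avg_resolvent n lam - avg_resolvent n mu) \<le> cmod (lam - mu) * (M * M * norm a)"
proof -
  have "norm (avg_resolvent n lam - avg_resolvent n mu)
      \<le> (1 / real n) * (\<Sum>k<n. norm (resolvent (root_unity n ^ k * lam) - resolvent (root_unity n ^ k * mu)))"
    unfolding avg_resolvent_def
    by (simp add: norm_of_complex_mult norm_divide norm_sum divide_right_mono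
        flip: right_diff_distrib sum_subtractf)
  also have "\<dots> \<le> (1 / real n) * (\<Sum>k<n. cmod (lam - mu) * (M * M * norm a))"
  proof (intro mult_left_mono sum_mono)
    fix k
    have "cmod (root_unity n ^ k * lam - root_unity n ^ k * mu) = cmod (lam - mu)"
      by (simp flip: right_diff_distrib add: norm_mult norm_power)
    then show "norm (resolvent (root_unity n ^ k * lam) - resolvent (root_unity n ^ k * mu))
        \<le> cmod (lam - mu) * (M * M * norm a)"
      using resolvent_lipschitz_on_disc[of "root_unity n ^ k * lam" "root_unity n ^ k * mu"] assms
      by (simp add: norm_mult norm_power)
  qed simp
  finally show ?thesis using assms by simp
qed

lemma bounded_powers_step:
  assumes r2: "0 \<le> r2" "r2 \<le> R" and r3: "0 \<le> r3" "r3 \<le> R"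
    and close: "\<bar>r3 - r2\<bar> * (M * M * norm a) \<le> 1 / 4"
    and decay: "(\<lambda>n. r2 ^ n * norm (a ^ n)) \<longlonglongrightarrow> 0"
  shows "\<exists>C. \<forall>n. r3 ^ n * norm (a ^ n) \<le> C"
proof (rule bounded_above_if_eventually)
  have "(\<lambda>n. M * (r2 ^ n * norm (a ^ n))) \<longlonglongrightarrow> 0"
    using tendsto_mult_right_zero[OF decay] by simp
  then have "\<forall>\<^sub>F n in sequentially. M * (r2 ^ n * norm (a ^ n)) < 1 / 4"
    by (rule order_tendstoD(2)) simp
  then have "\<forall>\<^sub>F n in sequentially. M * (r2 ^ n * norm (a ^ n)) < 1 / 4 \<and> n > 0"
    using eventually_gt_at_top by (rule eventually_conj)
  then show "\<forall>\<^sub>F n in sequentially. r3 ^ n * norm (a ^ n) \<le> 1"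
  proof (rule eventually_mono, elim conjE)
    fix n :: nat assume small: "M * (r2 ^ n * norm (a ^ n)) < 1 / 4" and "n > 0"
    let ?h = "\<lambda>r. avg_resolvent n (complex_of_real r)"
    have inv: "?h r * (1 - (of_complex (complex_of_real r) * a) ^ n) = 1" for r
      using avg_resolvent_inverse[OF \<open>n > 0\<close>] .
    have norm_power: "norm ((of_complex (complex_of_real r) * a) ^ n) = r ^ n * norm (a ^ n)"
      if "r \<ge> 0" for r
      using that by (simp add: power_of_complex_mult norm_of_complex_mult norm_power)
    have "?h r2 - 1 = ?h r2 * (of_complex (complex_of_real r2) * a) ^ n"
      using inv[of r2] by (simp add: algebra_simps)
    then have "norm (?h r2 - 1) \<le> norm (?h r2) * (r2 ^ n * norm (a ^ n))"
      using norm_mult_ineq norm_power[OF r2(1)] by metis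
    also have "\<dots> \<le> M * (r2 ^ n * norm (a ^ n))"
      using norm_avg_resolvent_le[OF \<open>n > 0\<close>, of "complex_of_real r2"] r2
      by (intro mult_right_mono) auto
    finally have "norm (?h r2 - 1) \<le> M * (r2 ^ n * norm (a ^ n))" .
    moreover have "norm (?h r3 - ?h r2) \<le> 1 / 4"
      using norm_avg_resolvent_diff_le[OF \<open>n > 0\<close>, of "complex_of_real r3" "complex_of_real r2"]
        r2 r3 close by (simp flip: of_real_diff)
    ultimately have "norm (?h r3 - 1) \<le> 1 / 2"
      using small norm_triangle_ineq[of "?h r3 - ?h r2" "?h r2 - 1"] by simp
    then show "r3 ^ n * norm (a ^ n) \<le> 1"
      using norm_le_one_if_inverse_near_one[OF inv[of r3]] norm_power[OF r3(1)] by simp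
  qed
qed


lemma bounded_powers_by_steps:
  assumes \<delta>: "\<delta> > 0" "2 * \<delta> * (M * M * norm a) \<le> 1 / 4"
  shows "0 \<le> r \<Longrightarrow> r \<le> R \<Longrightarrow> r \<le> real m * \<delta> \<Longrightarrow> \<exists>C. \<forall>n. r ^ n * norm (a ^ n) \<le> C"
proof (induction m arbitrary: r)
  case 0
  then have "r ^ n * norm (a ^ n) \<le> 1" for n by (cases n) simp_all
  then show ?case by blast
next
  case (Suc m)
  define r2 where "r2 = max 0 (r - 2 * \<delta>)"
  have "(\<lambda>n. r2 ^ n * norm (a ^ n)) \<longlonglongrightarrow> 0"
  proof (cases "r2 = 0")
    case True
    have "\<forall>\<^sub>F n in sequentially. r2 ^ n * norm (a ^ n) = 0"
      using eventually_gt_at_top[of 0] by (rule eventually_mono) (simp add: True)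
    then show ?thesis by (rule tendsto_eventually)
  next
    case False
    then have r2: "r2 = r - 2 * \<delta>" "r2 > 0" unfolding r2_def by auto
    moreover have "0 \<le> r - \<delta>" "r - \<delta> \<le> R" "r - \<delta> \<le> real m * \<delta>"
      using Suc.prems r2 \<delta> by (auto simp: algebra_simps)
    ultimately obtain C where "\<And>n. (r - \<delta>) ^ n * norm (a ^ n) \<le> C"
      using Suc.IH by blast
    then show ?thesis using r2 \<delta> by (intro powers_decay) auto
  qed
  moreover have "\<bar>r - r2\<bar> * (M * M * norm a) \<le> 2 * \<delta> * (M * M * norm a)"
    using Suc.prems \<delta> unfolding r2_def by (intro mult_right_mono) auto
  then have "\<bar>r - r2\<bar> * (M * M * norm a) \<le> 1 / 4" using \<delta>(2) by linarith
  moreover have "0 \<le> r2" "r2 \<le> R" using Suc.prems \<delta> unfolding r2_def by auto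
  ultimately show ?case using bounded_powers_step Suc.prems by blast
qed

end

lemma topologically_nilpotent: "topologically_nilpotent a"
  unfolding topologically_nilpotent_def subexponential_def
proof (intro allI impI)
  fix R :: real assume "R > 0"
  obtain M where M: "\<And>l. cmod l \<le> R \<Longrightarrow> norm (resolvent l) \<le> M"
    using resolvent_bounded_on_disc by blast
  define \<delta> where "\<delta> = 1 / (8 * (M * M * norm a + 1))"
  have "M * M * norm a \<ge> 0" by simp
  then have \<delta>: "\<delta> > 0" "2 * \<delta> * (M * M * norm a) \<le> 1 / 4"
    unfolding \<delta>_def by (simp_all add: field_simps)
  have "R \<le> real (nat \<lceil>R / \<delta>\<rceil>) * \<delta>"
    using real_nat_ceiling_ge[of "R / \<delta>"] \<delta> by (simp add: pos_divide_le_eq)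
  then show "\<exists>C. \<forall>n. R ^ n * norm (a ^ n) \<le> C"
    using bounded_powers_by_steps[OF M \<delta>] \<open>R > 0\<close> by simp
qed

end

lemma quasinilpotent_iff_topologically_nilpotent:
  "quasinilpotent a \<longleftrightarrow> topologically_nilpotent a"
  using topologically_nilpotent_imp_quasinilpotent spectrum_in_zero.topologically_nilpotent
  unfolding spectrum_in_zero_def quasinilpotent_def by blast

section \<open>Commutants and idempotent lifting\<close>

definition commutant :: "'a::ring_1 set \<Rightarrow> 'a set" where
  "commutant S = {y. \<forall>s\<in>S. s * y = y * s}"

abbreviation bicommutant :: "'a::ring_1 set \<Rightarrow> 'a set" where
  "bicommutant S \<equiv> commutant (commutant S)"

lemma commutant_1: "1 \<in> commutant S"
  and commutant_0: "0 \<in> commutant S"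
  unfolding commutant_def by simp_all

lemma commutant_add: "x \<in> commutant S \<Longrightarrow> y \<in> commutant S \<Longrightarrow> x + y \<in> commutant S"
  unfolding commutant_def by (simp add: distrib_left distrib_right)

lemma commutant_minus: "x \<in> commutant S \<Longrightarrow> - x \<in> commutant S"
  unfolding commutant_def by simp

lemma commutant_diff: "x \<in> commutant S \<Longrightarrow> y \<in> commutant S \<Longrightarrow> x - y \<in> commutant S"
  unfolding commutant_def by (simp add: left_diff_distrib right_diff_distrib)

lemma commutant_mult:
  assumes "x \<in> commutant S" "y \<in> commutant S"
  shows "x * y \<in> commutant S"
  unfolding commutant_def
proof (intro CollectI ballI)
  fix s assume "s \<in> S"
  then have "s * x = x * s" "s * y = y * s" using assms unfolding commutant_def by auto
  then show "s * (x * y) = x * y * s" by (metis mult.assoc)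
qed

lemma commutant_power: "x \<in> commutant S \<Longrightarrow> x ^ n \<in> commutant S"
  by (induction n) (simp_all add: commutant_1 commutant_mult)

lemma commutant_sum: "(\<And>i. i \<in> A \<Longrightarrow> f i \<in> commutant S) \<Longrightarrow> sum f A \<in> commutant S"
  by (induction A rule: infinite_finite_induct) (simp_all add: commutant_0 commutant_add)

lemma commutant_scaleR: "(x::'a::real_algebra_1) \<in> commutant S \<Longrightarrow> c *\<^sub>R x \<in> commutant S"
  unfolding commutant_def by simp

lemma commutant_suminf:
  fixes f :: "nat \<Rightarrow> 'a::{real_normed_algebra, ring_1}"
  assumes "summable f" "\<And>j. f j \<in> commutant S"
  shows "suminf f \<in> commutant S"
  unfolding commutant_def
proof (intro CollectI ballI)
  fix s assume "s \<in> S"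
  then have "(\<Sum>j. s * f j) = (\<Sum>j. f j * s)" using assms(2) unfolding commutant_def by simp
  then show "s * suminf f = suminf f * s"
    using suminf_mult[OF assms(1)] suminf_mult2[OF assms(1)] by simp
qed

lemma subset_bicommutant: "S \<subseteq> bicommutant S"
  unfolding commutant_def by auto

lemma bicommutant_commute:
  assumes "S \<subseteq> commutant S" "x \<in> bicommutant S" "y \<in> bicommutant S"
  shows "x * y = y * x"
proof -
  have "commutant (commutant S) \<subseteq> commutant S"
    using assms(1) unfolding commutant_def by blast
  then show ?thesis using assms(2,3) unfolding commutant_def by blast
qed

lemma bicommutant_singleton_commute:
  assumes "x \<in> bicommutant {e}" "y \<in> bicommutant {e}"
  shows "x * y = y * x"
proof (rule bicommutant_commute[OF _ assms])
  show "{e} \<subseteq> commutant {e}" by (simp add: commutant_def)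
qed

lemma bicommutant_subset:
  assumes "t \<in> bicommutant S"
  shows "bicommutant {t} \<subseteq> bicommutant S"
proof -
  have "commutant S \<subseteq> commutant {t}"
  proof
    fix y assume "y \<in> commutant S"
    then have "y * t = t * y" using assms unfolding commutant_def by blast
    then show "y \<in> commutant {t}" unfolding commutant_def by simp
  qed
  then show ?thesis unfolding commutant_def by blast
qed

lemma self_in_bicommutant: "e \<in> bicommutant {e}"
  using subset_bicommutant by blast

text \<open>The Taylor coefficients of \<open>(1 - 4 x)\<^sup>-\<^sup>1\<^sup>/\<^sup>2\<close>, i.e. the central binomial coefficients.\<close>

definition inv_sqrt_coeff :: "nat \<Rightarrow> real" where
  "inv_sqrt_coeff j = ((- 1 / 2) gchoose j) * (- 4) ^ j"

lemma inv_sqrt_coeff_0 [simp]: "inv_sqrt_coeff 0 = 1"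
  unfolding inv_sqrt_coeff_def by simp

lemma abs_inv_sqrt_coeff_le: "\<bar>inv_sqrt_coeff j\<bar> \<le> 4 ^ j"
proof -
  have "\<bar>(- 1 / 2 :: real) gchoose j\<bar> \<le> 1"
  proof (induction j)
    case (Suc j)
    have "real (Suc j) * ((- 1 / 2 :: real) gchoose Suc j) = (- 1 / 2 - real j) * ((- 1 / 2) gchoose j)"
      using gbinomial_mult_1[of "- 1 / 2 :: real" j] by (simp add: algebra_simps)
    then have "real (Suc j) * \<bar>(- 1 / 2 :: real) gchoose Suc j\<bar>
        = \<bar>- 1 / 2 - real j\<bar> * \<bar>(- 1 / 2 :: real) gchoose j\<bar>"
      by (metis abs_mult abs_of_nat)
    also have "\<dots> \<le> real (Suc j) * 1" using Suc by (intro mult_mono) auto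
    finally show ?case by simp
  qed simp
  then show ?thesis unfolding inv_sqrt_coeff_def abs_mult by (simp add: power_abs mult_left_le_one_le)
qed

lemma inv_sqrt_coeff_convolution: "(\<Sum>i\<le>m. inv_sqrt_coeff i * inv_sqrt_coeff (m - i)) = 4 ^ m"
proof -
  have "(\<Sum>i\<le>m. inv_sqrt_coeff i * inv_sqrt_coeff (m - i))
      = (- 4) ^ m * (\<Sum>i\<le>m. ((- 1 / 2 :: real) gchoose i) * ((- 1 / 2) gchoose (m - i)))"
    unfolding sum_distrib_left
  proof (intro sum.cong refl)
    fix i assume "i \<in> {..m}"
    then have powers: "(- 4 :: real) ^ m = (- 4) ^ i * (- 4) ^ (m - i)" by (simp flip: power_add)
    show "inv_sqrt_coeff i * inv_sqrt_coeff (m - i)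
        = (- 4) ^ m * (((- 1 / 2 :: real) gchoose i) * ((- 1 / 2) gchoose (m - i)))"
      unfolding inv_sqrt_coeff_def powers by (simp only: mult_ac)
  qed
  also have "\<dots> = (- 4) ^ m * ((- 1 :: real) gchoose m)"
    using gbinomial_Vandermonde[of "- 1 / 2 :: real" "- 1 / 2" m] by (simp add: atMost_atLeast0)
  also have "\<dots> = (- 4) ^ m * (- 1) ^ m"
    using gbinomial_minus[of "1 :: real" m] by (simp add: binomial_gbinomial[symmetric])
  also have "\<dots> = 4 ^ m"
    by (simp only: power_mult_distrib[symmetric]) simp
  finally show ?thesis .
qed

lemma summable_inv_sqrt_series:
  fixes t :: "'a::{banach, real_normed_algebra_1}"
  assumes "topologically_nilpotent t"
  shows "summable (\<lambda>j. norm (inv_sqrt_coeff (j + i) *\<^sub>R t ^ j))"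
proof (rule summable_comparison_test)
  show "summable (\<lambda>j. 4 ^ i * (4 ^ j * norm (t ^ j)))"
    using topologically_nilpotent_summable[OF assms, of 4] by (intro summable_mult) simp
  show "\<exists>N. \<forall>j\<ge>N. norm (norm (inv_sqrt_coeff (j + i) *\<^sub>R t ^ j)) \<le> 4 ^ i * (4 ^ j * norm (t ^ j))"
  proof (intro exI[of _ 0] allI impI)
    fix j
    have "\<bar>inv_sqrt_coeff (j + i)\<bar> * norm (t ^ j) \<le> 4 ^ (j + i) * norm (t ^ j)"
      by (intro mult_right_mono abs_inv_sqrt_coeff_le) simp
    then show "norm (norm (inv_sqrt_coeff (j + i) *\<^sub>R t ^ j)) \<le> 4 ^ i * (4 ^ j * norm (t ^ j))"
      by (simp add: power_add mult_ac)
  qed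
qed

lemma inverse_sqrt_series:
  fixes t :: "'a::{banach, real_normed_algebra_1}"
  assumes tn: "topologically_nilpotent t"
  obtains R where "(1 - 4 *\<^sub>R t) * (R * R) = 1" "R \<in> bicommutant {t}"
    "topologically_nilpotent (R - 1)"
proof -
  define c where "c j = inv_sqrt_coeff j *\<^sub>R t ^ j" for j
  define c' where "c' j = inv_sqrt_coeff (Suc j) *\<^sub>R t ^ j" for j
  have tB: "t \<in> bicommutant {t}" by (rule self_in_bicommutant)
  have sum_c: "summable (\<lambda>j. norm (c j))"
    using summable_inv_sqrt_series[OF tn, of 0] by (simp add: c_def)
  have sum_c': "summable (\<lambda>j. norm (c' j))"
    using summable_inv_sqrt_series[OF tn, of 1] by (simp add: c'_def)
  define R where "R = suminf c"
  define R' where "R' = suminf c'"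
  have RB: "R \<in> bicommutant {t}"
    unfolding R_def using summable_norm_cancel[OF sum_c]
    by (rule commutant_suminf) (simp add: c_def commutant_scaleR commutant_power tB)
  have R'B: "R' \<in> bicommutant {t}"
    unfolding R'_def using summable_norm_cancel[OF sum_c']
    by (rule commutant_suminf) (simp add: c'_def commutant_scaleR commutant_power tB)
  have convolution: "(\<Sum>i\<le>k. c i * c (k - i)) = (4 *\<^sub>R t) ^ k" for k
  proof -
    have "(\<Sum>i\<le>k. c i * c (k - i)) = (\<Sum>i\<le>k. (inv_sqrt_coeff i * inv_sqrt_coeff (k - i)) *\<^sub>R t ^ k)"
      by (intro sum.cong refl) (simp add: c_def flip: power_add)
    then show ?thesis by (simp add: inv_sqrt_coeff_convolution flip: scaleR_sum_left)
  qed
  have "(\<lambda>k. (4 *\<^sub>R t) ^ k) sums (R * R)"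
    using Cauchy_product_sums[OF sum_c sum_c] unfolding R_def convolution .
  then have RR: "R * R = (\<Sum>k. (4 *\<^sub>R t) ^ k)" by (rule sums_unique)
  have "summable (\<lambda>k. norm ((4 *\<^sub>R t) ^ k))"
    using topologically_nilpotent_summable[OF tn, of 4] by simp
  then have inverse: "(1 - 4 *\<^sub>R t) * (R * R) = 1"
    unfolding RR by (rule neumann_series(1))
  have "(\<Sum>j. c (Suc j)) = R - c 0"
    unfolding R_def by (rule suminf_split_head[OF summable_norm_cancel[OF sum_c]])
  moreover have "(\<Sum>j. c (Suc j)) = t * R'"
  proof -
    have "c (Suc j) = t * c' j" for j by (simp add: c_def c'_def)
    then show ?thesis
      unfolding R'_def using suminf_mult[OF summable_norm_cancel[OF sum_c'], of t] by simp
  qed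
  ultimately have "R - 1 = t * R'" by (simp add: c_def)
  then have "topologically_nilpotent (R - 1)"
    using topologically_nilpotent_mult_commuting[OF bicommutant_singleton_commute[OF tB R'B] tn]
    by simp
  with inverse RB show ?thesis using that by blast
qed

lemma idempotent_lifting:
  fixes g :: "'a::{banach, real_normed_algebra_1}"
  assumes "topologically_nilpotent (g - g * g)"
  obtains p where "p * p = p" "p \<in> bicommutant {g}" "topologically_nilpotent (g - p)"
proof -
  have gB: "g \<in> bicommutant {g}" by (rule self_in_bicommutant)
  obtain R where RR: "(1 - 4 *\<^sub>R (g - g * g)) * (R * R) = 1"
    and "R \<in> bicommutant {g - g * g}" and tn: "topologically_nilpotent (R - 1)"
    using inverse_sqrt_series[OF assms] by blast
  moreover have "g - g * g \<in> bicommutant {g}" by (intro commutant_diff commutant_mult gB)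
  ultimately have RB: "R \<in> bicommutant {g}" using bicommutant_subset by blast
  note comm = bicommutant_singleton_commute[of _ g]
  \<comment> \<open>\<open>u\<^sup>2 = 1 - 4 (g - g\<^sup>2)\<close>, so \<open>u R\<close> is an involution and \<open>(1 - u R) / 2\<close> an idempotent.\<close>
  define u where "u = 1 - 2 *\<^sub>R g"
  have uB: "u \<in> bicommutant {g}" unfolding u_def by (intro commutant_diff commutant_1 commutant_scaleR gB)
  have uu: "u * u = 1 - 4 *\<^sub>R (g - g * g)"
    unfolding u_def by (simp add: algebra_simps flip: scaleR_add_left)
  define p where "p = (1 / 2) *\<^sub>R (1 - u * R)"
  have "R * u = u * R" by (rule comm[OF RB uB])
  then have "(u * R) * (u * R) = (u * u) * (R * R)" by (metis mult.assoc)
  then have "(u * R) * (u * R) = 1" using RR uu by simp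
  then have "(1 - u * R) * (1 - u * R) = 2 *\<^sub>R (1 - u * R)"
    by (simp add: algebra_simps scaleR_2)
  then have pp: "p * p = p" unfolding p_def by simp
  have "p \<in> bicommutant {g}"
    unfolding p_def by (intro commutant_scaleR commutant_diff commutant_mult commutant_1 uB RB)
  have "g = (1 / 2) *\<^sub>R (1 - u)" unfolding u_def by simp
  then have "g - p = (1 / 2) *\<^sub>R (u * (R - 1))" unfolding p_def by (simp add: algebra_simps)
  moreover have "u * (R - 1) = (R - 1) * u" using comm[OF RB uB] by (simp add: algebra_simps)
  ultimately have gp: "g - p = (R - 1) * ((1 / 2) *\<^sub>R u)" by simp
  have "(R - 1) * ((1 / 2) *\<^sub>R u) = ((1 / 2) *\<^sub>R u) * (R - 1)"
    by (intro comm commutant_scaleR commutant_diff commutant_1 RB uB)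
  then have "topologically_nilpotent (g - p)"
    unfolding gp by (rule topologically_nilpotent_mult_commuting[OF _ tn])
  with pp \<open>p \<in> bicommutant {g}\<close> show ?thesis using that by blast
qed

lemma one_plus_topologically_nilpotent_inverse:
  fixes d :: "'a::{banach, real_normed_algebra_1}"
  assumes "topologically_nilpotent d"
  obtains v where "(1 + d) * v = 1" "v \<in> bicommutant {d}"
proof -
  have summable: "summable (\<lambda>j. norm ((- d) ^ j))"
    using topologically_nilpotent_summable[OF topologically_nilpotent_minus[OF assms], of 1] by simp
  have "(1 + d) * (\<Sum>j. (- d) ^ j) = 1" using neumann_series(1)[OF summable] by simp
  moreover have "(\<Sum>j. (- d) ^ j) \<in> bicommutant {d}"
    using summable_norm_cancel[OF summable]
    by (rule commutant_suminf) (intro commutant_power commutant_minus self_in_bicommutant)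
  ultimately show ?thesis using that by blast
qed

section \<open>Generalized \<open>\<pi>\<close>-Hirano invertibility\<close>

lemma power_add_2: "x ^ (n + 2) = x ^ (n + 1) * (x::'a::monoid_mult)"
proof -
  have "x ^ (n + 2) = x ^ Suc (n + 1)" by simp
  then show ?thesis by (simp only: power_Suc2)
qed

lemma topologically_nilpotent_diff_power_multiple:
  fixes e :: "'a::real_normed_algebra_1"
  assumes tn: "topologically_nilpotent (e - e ^ (n + 1))"
  shows "topologically_nilpotent (e - e ^ (n * m + 1))"
proof -
  define s where "s = e - e ^ (n + 1)"
  define \<sigma> where "\<sigma> = (\<Sum>i<m. e ^ (n * i))"
  have "s * \<sigma> = (\<Sum>i<m. e ^ (n * i + 1) - e ^ (n * Suc i + 1))"
    unfolding s_def \<sigma>_def sum_distrib_left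
    by (intro sum.cong refl) (simp add: algebra_simps flip: power_add)
  also have "\<dots> = e - e ^ (n * m + 1)"
    using sum_lessThan_telescope'[of "\<lambda>i. e ^ (n * i + 1)" m] by simp
  finally have telescope: "s * \<sigma> = e - e ^ (n * m + 1)" .
  have "s \<in> bicommutant {e}" "\<sigma> \<in> bicommutant {e}"
    unfolding s_def \<sigma>_def
    by (intro commutant_diff commutant_sum commutant_power self_in_bicommutant)+
  then have "s * \<sigma> = \<sigma> * s" by (rule bicommutant_singleton_commute)
  from topologically_nilpotent_mult_commuting[OF this tn[folded s_def]] show ?thesis
    unfolding telescope .
qed

lemma gpi_Hirano_invertible_imp_topologically_nilpotent:
  fixes e :: "'a::complex_banach_algebra_1"
  assumes "gpi_Hirano_invertible e"
  obtains n where "n > 0" "topologically_nilpotent (e - e ^ (n + 1))"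
proof -
  obtain x n where xex: "x * e * x = x" and ex: "e * x = x * e" and "n > 0"
    and qn: "quasinilpotent (e - e ^ (n + 2) * x)"
    using assms unfolding gpi_Hirano_invertible_def by blast
  define S where "S = {e, x}"
  have S: "S \<subseteq> commutant S" unfolding S_def commutant_def using ex by auto
  have eB: "e \<in> bicommutant S" and xB: "x \<in> bicommutant S"
    using subset_bicommutant unfolding S_def by blast+
  define p where "p = e * x"
  define w where "w = e - e ^ (n + 2) * x"
  have pp: "p * p = p" unfolding p_def by (metis xex ex mult.assoc)
  have w_eq: "w = e - e ^ (n + 1) * p"
    unfolding w_def p_def power_add_2 by (simp only: mult.assoc)
  have "w * (1 - p) = e * (1 - p)"
    unfolding w_eq using pp by (simp add: algebra_simps)
  moreover have "w * e ^ n = e ^ n * w"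
    by (rule bicommutant_commute[OF S]) (auto simp: w_def intro!: commutant_diff commutant_mult
        commutant_power eB xB)
  then have "w * (e ^ n * (1 - p)) = e ^ n * (w * (1 - p))" by (metis mult.assoc)
  ultimately have "w * (1 - e ^ n * (1 - p)) = w - e ^ n * (e * (1 - p))"
    by (simp add: right_diff_distrib)
  also have "\<dots> = e - e ^ (n + 1)"
    unfolding w_eq power_Suc2[of e n, unfolded Suc_eq_plus1] by (simp add: algebra_simps)
  finally have factor: "w * (1 - e ^ n * (1 - p)) = e - e ^ (n + 1)" .
  have "w * (1 - e ^ n * (1 - p)) = (1 - e ^ n * (1 - p)) * w"
    by (rule bicommutant_commute[OF S]) (auto simp: w_def p_def intro!: commutant_diff
        commutant_mult commutant_power commutant_1 eB xB)
  moreover have "topologically_nilpotent w"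
    using qn unfolding w_def quasinilpotent_iff_topologically_nilpotent .
  ultimately have "topologically_nilpotent (w * (1 - e ^ n * (1 - p)))"
    by (rule topologically_nilpotent_mult_commuting)
  with \<open>n > 0\<close> show ?thesis unfolding factor by (rule that)
qed

lemma idempotent_power: "(q::'a::monoid_mult) * q = q \<Longrightarrow> n > 0 \<Longrightarrow> q ^ n = q"
proof (induction n)
  case (Suc n)
  then show ?case by (cases n) (simp_all add: power_Suc2[symmetric])
qed simp

lemma spectral_idempotent:
  fixes e :: "'a::{banach, real_normed_algebra_1}"
  assumes "n > 0" and tn: "topologically_nilpotent (e - e ^ (n + 1))"
  obtains p where "p * p = p" "p \<in> bicommutant {e}" "topologically_nilpotent (e ^ n - p)"
proof -
  obtain m where n: "n = Suc m" using \<open>n > 0\<close> by (cases n) auto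
  have eB: "e \<in> bicommutant {e}" by (rule self_in_bicommutant)
  have "e ^ n * e ^ n = e ^ m * e ^ (n + 1)" unfolding n by (simp only: power_add[symmetric]) simp
  moreover have "e ^ m * e = e ^ n" unfolding n by (rule power_Suc2[symmetric])
  ultimately have factor: "e ^ n - e ^ n * e ^ n = e ^ m * (e - e ^ (n + 1))"
    by (simp only: right_diff_distrib)
  have "(e - e ^ (n + 1)) * e ^ m = e ^ m * (e - e ^ (n + 1))"
    by (intro bicommutant_singleton_commute[of _ e] commutant_diff commutant_power eB)
  from topologically_nilpotent_mult_commuting[OF this tn]
  have "topologically_nilpotent (e ^ n - e ^ n * e ^ n)"
    unfolding factor \<open>(e - e ^ (n + 1)) * e ^ m = e ^ m * (e - e ^ (n + 1))\<close> .
  then obtain p where "p * p = p" "p \<in> bicommutant {e ^ n}" "topologically_nilpotent (e ^ n - p)"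
    by (rule idempotent_lifting)
  moreover have "bicommutant {e ^ n} \<subseteq> bicommutant {e}"
    by (intro bicommutant_subset commutant_power eB)
  ultimately show ?thesis using that by blast
qed

lemma topologically_nilpotent_mult_complement:
  fixes e :: "'a::real_normed_algebra_1"
  assumes pp: "p * p = p" and pB: "p \<in> bicommutant {e}"
    and "n > 0" and tn: "topologically_nilpotent (e ^ n - p)"
  shows "topologically_nilpotent (e * (1 - p))"
proof -
  note comm = bicommutant_singleton_commute[of _ e]
  have eB: "e \<in> bicommutant {e}" by (rule self_in_bicommutant)
  have "(1 - p) * (1 - p) = 1 - p" using pp by (simp add: algebra_simps)
  then have "(1 - p) ^ n = 1 - p" using \<open>n > 0\<close> by (rule idempotent_power)
  then have "(e * (1 - p)) ^ n = e ^ n * (1 - p)"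
    using power_mult_commuting[OF comm[OF eB], of "1 - p" n]
    by (simp add: commutant_diff commutant_1 pB)
  also have "\<dots> = (e ^ n - p) * (1 - p)" using pp by (simp add: algebra_simps)
  finally have "topologically_nilpotent ((e * (1 - p)) ^ n)"
    using topologically_nilpotent_mult_commuting[OF comm tn]
    by (simp add: commutant_diff commutant_1 commutant_power eB pB)
  then show ?thesis by (rule topologically_nilpotent_of_power[OF \<open>n > 0\<close>])
qed

lemma gpi_Hirano_invertible_if_topologically_nilpotent:
  fixes e :: "'a::complex_banach_algebra_1"
  assumes "n > 0" and tn: "topologically_nilpotent (e - e ^ (n + 1))"
  shows "gpi_Hirano_invertible e"
proof -
  obtain m where n: "n = Suc m" using \<open>n > 0\<close> by (cases n) auto
  have eB: "e \<in> bicommutant {e}" by (rule self_in_bicommutant)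
  note comm = bicommutant_singleton_commute[of _ e]
  obtain p where pp: "p * p = p" and pB: "p \<in> bicommutant {e}" and tn_d: "topologically_nilpotent (e ^ n - p)"
    using spectral_idempotent[OF assms] by blast
  define d where "d = e ^ n - p"
  have dB: "d \<in> bicommutant {e}" unfolding d_def by (intro commutant_diff commutant_power eB pB)
  obtain v where v: "(1 + d) * v = 1" and "v \<in> bicommutant {d}"
    using one_plus_topologically_nilpotent_inverse[OF tn_d[folded d_def]] by blast
  then have vB: "v \<in> bicommutant {e}" using bicommutant_subset[OF dB] by blast
  define x where "x = e ^ m * p * v"
  have xB: "x \<in> bicommutant {e}" unfolding x_def by (intro commutant_mult commutant_power eB pB vB)
  have ex: "e * x = p"
  proof -
    have "e * x = (p + d) * p * v" unfolding x_def d_def n by (simp add: mult.assoc)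
    also have "\<dots> = p * (1 + d) * v" using comm[OF dB pB] pp by (simp add: algebra_simps)
    finally show ?thesis using v by (simp add: mult.assoc)
  qed
  have xe: "x * e = e * x" by (rule comm[OF xB eB])
  have "p * e ^ m = e ^ m * p" by (rule comm[OF pB commutant_power[OF eB]])
  then have "p * x = x" unfolding x_def using pp by (metis mult.assoc)
  then have xex: "x * e * x = x" unfolding xe ex .
  define s where "s = e - e ^ (n + 1)"
  have sB: "s \<in> bicommutant {e}" unfolding s_def by (intro commutant_diff commutant_power eB)
  have "e ^ (n + 2) * x = e ^ (n + 1) * p" unfolding power_add_2 by (simp add: mult.assoc ex)
  then have remainder: "e - e ^ (n + 2) * x = e * (1 - p) + s * p"
    unfolding s_def by (simp add: algebra_simps)
  have "topologically_nilpotent (e * (1 - p))"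
    using pp pB \<open>n > 0\<close> tn_d by (rule topologically_nilpotent_mult_complement)
  moreover have "topologically_nilpotent (s * p)"
    using topologically_nilpotent_mult_commuting[OF comm[OF sB pB] tn[folded s_def]] .
  moreover have "e * (1 - p) * (s * p) = s * p * (e * (1 - p))"
    by (intro comm commutant_mult commutant_diff commutant_1 eB pB sB)
  ultimately have "quasinilpotent (e - e ^ (n + 2) * x)"
    unfolding remainder quasinilpotent_iff_topologically_nilpotent
    by (intro topologically_nilpotent_add_commuting)
  then show ?thesis
    unfolding gpi_Hirano_invertible_def using xex xe[symmetric] \<open>n > 0\<close> by blast
qed

lemma gpi_Hirano_invertible_iff_topologically_nilpotent:
  "gpi_Hirano_invertible e \<longleftrightarrow> (\<exists>n>0. topologically_nilpotent (e - e ^ (n + 1)))"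
  by (blast elim: gpi_Hirano_invertible_imp_topologically_nilpotent
      intro: gpi_Hirano_invertible_if_topologically_nilpotent)

section \<open>Commuting prefixes of words in \<open>a\<close> and \<open>b\<close>\<close>

locale word_commuting =
  fixes a b :: "'a::ring_1" and k :: nat
  assumes long_words_commute:
    "\<And>ws. length ws = k \<Longrightarrow> set ws \<subseteq> {a, b} \<Longrightarrow> prod_list ws * a * b = prod_list ws * b * a"
begin

inductive_set ring_ab :: "'a set" where
  one: "1 \<in> ring_ab"
| mult_a: "u \<in> ring_ab \<Longrightarrow> a * u \<in> ring_ab"
| mult_b: "u \<in> ring_ab \<Longrightarrow> b * u \<in> ring_ab"
| add: "u \<in> ring_ab \<Longrightarrow> v \<in> ring_ab \<Longrightarrow> u + v \<in> ring_ab"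
| minus: "u \<in> ring_ab \<Longrightarrow> - u \<in> ring_ab"

lemma ring_ab_0: "0 \<in> ring_ab"
  using ring_ab.add[OF ring_ab.one ring_ab.minus[OF ring_ab.one]] by simp

lemma ring_ab_a: "a \<in> ring_ab" and ring_ab_b: "b \<in> ring_ab"
  using ring_ab.mult_a[OF ring_ab.one] ring_ab.mult_b[OF ring_ab.one] by simp_all

lemma ring_ab_diff: "u \<in> ring_ab \<Longrightarrow> v \<in> ring_ab \<Longrightarrow> u - v \<in> ring_ab"
  using ring_ab.add[OF _ ring_ab.minus] by (simp only: diff_conv_add_uminus)

lemma ring_ab_mult: "u \<in> ring_ab \<Longrightarrow> v \<in> ring_ab \<Longrightarrow> u * v \<in> ring_ab"
proof (induction u rule: ring_ab.induct)
  case (add u w)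
  then show ?case using ring_ab.add by (simp add: distrib_right)
qed (simp_all add: mult.assoc ring_ab.intros)

lemma ring_ab_power: "u \<in> ring_ab \<Longrightarrow> u ^ n \<in> ring_ab"
  by (induction n) (simp_all add: ring_ab.one ring_ab_mult)

lemma ring_ab_sum: "(\<And>i. i \<in> A \<Longrightarrow> f i \<in> ring_ab) \<Longrightarrow> sum f A \<in> ring_ab"
  by (induction A rule: infinite_finite_induct) (simp_all add: ring_ab_0 ring_ab.add)

lemma ring_ab_of_nat: "of_nat n \<in> ring_ab"
  by (induction n) (simp_all add: ring_ab_0 ring_ab.one ring_ab.add)

definition commuting_prefixes :: "'a set" where
  "commuting_prefixes = {P. \<forall>u\<in>ring_ab. P * u * a * b = P * u * b * a}"

lemma commuting_prefixesD:
  "P \<in> commuting_prefixes \<Longrightarrow> u \<in> ring_ab \<Longrightarrow> P * u * a * b = P * u * b * a"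
  unfolding commuting_prefixes_def by blast

lemma commuting_prefixes_mult_right:
  assumes "P \<in> commuting_prefixes" "v \<in> ring_ab"
  shows "P * v \<in> commuting_prefixes"
  unfolding commuting_prefixes_def
  using commuting_prefixesD[OF assms(1) ring_ab_mult[OF assms(2)]] by (simp add: mult.assoc)

lemma commuting_prefixes_add:
  "P \<in> commuting_prefixes \<Longrightarrow> Q \<in> commuting_prefixes \<Longrightarrow> P + Q \<in> commuting_prefixes"
  unfolding commuting_prefixes_def by (auto simp: distrib_right)

lemma commuting_prefixes_minus: "P \<in> commuting_prefixes \<Longrightarrow> - P \<in> commuting_prefixes"
  unfolding commuting_prefixes_def by auto

lemma long_word_commuting_prefix:
  assumes "set ws \<subseteq> {a, b}" "k \<le> length ws"
  shows "prod_list ws \<in> commuting_prefixes"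
proof -
  have "\<forall>ws. set ws \<subseteq> {a, b} \<longrightarrow> k \<le> length ws \<longrightarrow> prod_list ws * u * a * b = prod_list ws * u * b * a"
    if "u \<in> ring_ab" for u
    using that
  proof (induction u rule: ring_ab.induct)
    case one
    show ?case
    proof (intro allI impI)
      fix ws :: "'a list" assume ws: "set ws \<subseteq> {a, b}" "k \<le> length ws"
      define ws1 ws2 where "ws1 = take (length ws - k) ws" and "ws2 = drop (length ws - k) ws"
      have "ws = ws1 @ ws2" unfolding ws1_def ws2_def by simp
      moreover have "prod_list ws2 * a * b = prod_list ws2 * b * a"
        using ws set_drop_subset[of _ ws] unfolding ws2_def by (intro long_words_commute) auto
      ultimately show "prod_list ws * 1 * a * b = prod_list ws * 1 * b * a"
        by (simp add: mult.assoc)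
    qed
  next
    case (mult_a u)
    show ?case
    proof (intro allI impI)
      fix ws :: "'a list" assume "set ws \<subseteq> {a, b}" "k \<le> length ws"
      then have "prod_list (ws @ [a]) * u * a * b = prod_list (ws @ [a]) * u * b * a"
        using mult_a.IH[rule_format, of "ws @ [a]"] by simp
      then show "prod_list ws * (a * u) * a * b = prod_list ws * (a * u) * b * a"
        by (simp add: mult.assoc)
    qed
  next
    case (mult_b u)
    show ?case
    proof (intro allI impI)
      fix ws :: "'a list" assume "set ws \<subseteq> {a, b}" "k \<le> length ws"
      then have "prod_list (ws @ [b]) * u * a * b = prod_list (ws @ [b]) * u * b * a"
        using mult_b.IH[rule_format, of "ws @ [b]"] by simp
      then show "prod_list ws * (b * u) * a * b = prod_list ws * (b * u) * b * a"
        by (simp add: mult.assoc)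
    qed
  qed (simp_all add: distrib_left distrib_right)
  then show ?thesis unfolding commuting_prefixes_def using assms by blast
qed

definition completes_prefixes :: "nat \<Rightarrow> 'a \<Rightarrow> bool" where
  "completes_prefixes n X \<longleftrightarrow>
     (\<forall>ws. set ws \<subseteq> {a, b} \<longrightarrow> k \<le> length ws + n \<longrightarrow> prod_list ws * X \<in> commuting_prefixes)"

lemma completes_prefixes_0: "u \<in> ring_ab \<Longrightarrow> completes_prefixes 0 u"
  unfolding completes_prefixes_def
  using long_word_commuting_prefix commuting_prefixes_mult_right by auto

lemma completes_prefixes_append:
  assumes "completes_prefixes n X" "x \<in> {a, b}"
  shows "completes_prefixes (Suc n) (x * X)"
  unfolding completes_prefixes_def
proof (intro allI impI)
  fix ws :: "'a list" assume "set ws \<subseteq> {a, b}" "k \<le> length ws + Suc n"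
  moreover have "set (ws @ [x]) \<subseteq> {a, b}" "k \<le> length (ws @ [x]) + n"
    using calculation assms(2) by auto
  ultimately have "prod_list (ws @ [x]) * X \<in> commuting_prefixes"
    using assms(1) unfolding completes_prefixes_def by blast
  then show "prod_list ws * (x * X) \<in> commuting_prefixes" by (simp add: mult.assoc)
qed

lemma completes_prefixes_SucD: "completes_prefixes (Suc n) X \<Longrightarrow> completes_prefixes n X"
  unfolding completes_prefixes_def by simp

lemma completes_prefixes_mult_left:
  assumes "u \<in> ring_ab" "completes_prefixes n X"
  shows "completes_prefixes n (u * X)"
  using assms
proof (induction u rule: ring_ab.induct)
  case (mult_a u)
  then have "completes_prefixes (Suc n) (a * (u * X))" by (simp add: completes_prefixes_append)
  then show ?case by (metis completes_prefixes_SucD mult.assoc)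
next
  case (mult_b u)
  then have "completes_prefixes (Suc n) (b * (u * X))" by (simp add: completes_prefixes_append)
  then show ?case by (metis completes_prefixes_SucD mult.assoc)
next
  case (add u v)
  then show ?case
    unfolding completes_prefixes_def by (simp add: distrib_right distrib_left commuting_prefixes_add)
next
  case (minus u)
  then show ?case unfolding completes_prefixes_def by (simp add: commuting_prefixes_minus)
qed simp

lemma power_commuting_prefix:
  assumes "u \<in> ring_ab" "v \<in> ring_ab"
  shows "(a * u + b * v) ^ k \<in> commuting_prefixes"
proof -
  let ?f = "a * u + b * v"
  have "completes_prefixes n (?f ^ n)" for n
  proof (induction n)
    case 0
    then show ?case using completes_prefixes_0[OF ring_ab.one] by simp
  next
    case (Suc n)
    have "completes_prefixes (Suc n) (a * (u * ?f ^ n) + b * (v * ?f ^ n))"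
      unfolding completes_prefixes_def
      using completes_prefixes_append[OF completes_prefixes_mult_left[OF assms(1) Suc], of a]
        completes_prefixes_append[OF completes_prefixes_mult_left[OF assms(2) Suc], of b]
      by (simp add: completes_prefixes_def distrib_left commuting_prefixes_add)
    then show ?case by (simp add: distrib_right mult.assoc)
  qed
  from this[of k] show ?thesis
    unfolding completes_prefixes_def by (metis empty_subsetI list.size(3) mult_1_left
        prod_list.Nil set_empty add_0 order_refl)
qed

lemma commuting_prefix_swap_generator:
  assumes P: "P \<in> commuting_prefixes" and "w \<in> ring_ab" and x: "x \<in> {a, b}"
  shows "u \<in> ring_ab \<Longrightarrow> P * u * x * w = P * u * w * x"
  using assms(2)
proof (induction w arbitrary: u rule: ring_ab.induct)
  case (mult_a w)
  have "P * u * x * a = P * u * a * x"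
    using x commuting_prefixesD[OF P mult_a.prems] by auto
  then have "P * u * x * (a * w) = P * (u * a) * x * w" by (metis mult.assoc)
  also have "\<dots> = P * (u * a) * w * x"
    using mult_a.IH ring_ab_mult[OF mult_a.prems ring_ab_a] by blast
  finally show ?case by (simp only: mult.assoc)
next
  case (mult_b w)
  have "P * u * x * b = P * u * b * x"
    using x commuting_prefixesD[OF P mult_b.prems] by auto
  then have "P * u * x * (b * w) = P * (u * b) * x * w" by (metis mult.assoc)
  also have "\<dots> = P * (u * b) * w * x"
    using mult_b.IH ring_ab_mult[OF mult_b.prems ring_ab_b] by blast
  finally show ?case by (simp only: mult.assoc)
qed (simp_all add: distrib_left distrib_right)

lemma commuting_prefix_swap:
  assumes P: "P \<in> commuting_prefixes" and "v \<in> ring_ab" "w \<in> ring_ab"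
  shows "u \<in> ring_ab \<Longrightarrow> P * u * v * w = P * u * w * v"
  using assms(2)
proof (induction v arbitrary: u rule: ring_ab.induct)
  case (mult_a v)
  have "P * u * (a * v) * w = P * (u * a) * v * w" by (simp only: mult.assoc)
  also have "\<dots> = P * (u * a) * w * v"
    using mult_a.IH ring_ab_mult[OF mult_a.prems ring_ab_a] by blast
  also have "\<dots> = (P * u * a * w) * v" by (simp only: mult.assoc)
  also have "P * u * a * w = P * u * w * a"
    using commuting_prefix_swap_generator[OF P \<open>w \<in> ring_ab\<close> _ mult_a.prems, of a] by simp
  finally show ?case by (simp only: mult.assoc)
next
  case (mult_b v)
  have "P * u * (b * v) * w = P * (u * b) * v * w" by (simp only: mult.assoc)
  also have "\<dots> = P * (u * b) * w * v"
    using mult_b.IH ring_ab_mult[OF mult_b.prems ring_ab_b] by blast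
  also have "\<dots> = (P * u * b * w) * v" by (simp only: mult.assoc)
  also have "P * u * b * w = P * u * w * b"
    using commuting_prefix_swap_generator[OF P \<open>w \<in> ring_ab\<close> _ mult_b.prems, of b] by simp
  finally show ?case by (simp only: mult.assoc)
qed (simp_all add: distrib_left distrib_right)

lemma commuting_prefix_binomial:
  assumes "P \<in> commuting_prefixes" "x \<in> ring_ab" "y \<in> ring_ab"
  shows "P * (x + y) ^ n = (\<Sum>i\<le>n. of_nat (n choose i) * (P * x ^ i * y ^ (n - i)))"
proof (rule prefixed_binomial)
  fix i m
  have "P * x ^ i * y ^ m * x = P * x ^ i * x * y ^ m"
    by (rule commuting_prefix_swap[OF assms(1) ring_ab_power[OF assms(3)] assms(2)
          ring_ab_power[OF assms(2)]])
  then show "P * x ^ i * y ^ m * x = P * x ^ Suc i * y ^ m" by (simp only: power_Suc2 mult.assoc)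
qed

lemma commuting_prefix_power_mult:
  assumes "P \<in> commuting_prefixes" "x \<in> ring_ab" "y \<in> ring_ab"
  shows "P * (x * y) ^ j = P * x ^ j * y ^ j"
proof (induction j)
  case (Suc j)
  have "P * (x * y) ^ Suc j = P * (x * y) ^ j * x * y" by (simp only: power_Suc2 mult.assoc)
  also have "\<dots> = P * x ^ j * y ^ j * x * y" by (simp only: Suc)
  also have "P * x ^ j * y ^ j * x = P * x ^ j * x * y ^ j"
    by (rule commuting_prefix_swap[OF assms(1) ring_ab_power[OF assms(3)] assms(2)
          ring_ab_power[OF assms(2)]])
  finally show ?case by (simp only: power_Suc2 mult.assoc)
qed simp

lemma commuting_prefix_binomial_split:
  assumes P: "P \<in> commuting_prefixes"
  shows "P * (a + b) ^ Suc m
    = P * b ^ Suc m + P * (a * (\<Sum>i\<le>m. of_nat (Suc m choose Suc i) * (a ^ i * b ^ (m - i))))"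
proof -
  have "P * (a + b) ^ Suc m = (\<Sum>i\<le>Suc m. of_nat (Suc m choose i) * (P * a ^ i * b ^ (Suc m - i)))"
    by (rule commuting_prefix_binomial[OF P ring_ab_a ring_ab_b])
  also have "\<dots> = P * b ^ Suc m + (\<Sum>i\<le>m. of_nat (Suc m choose Suc i) * (P * a ^ Suc i * b ^ (m - i)))"
    by (subst sum.atMost_Suc_shift) simp
  also have "(\<Sum>i\<le>m. of_nat (Suc m choose Suc i) * (P * a ^ Suc i * b ^ (m - i)))
      = P * (a * (\<Sum>i\<le>m. of_nat (Suc m choose Suc i) * (a ^ i * b ^ (m - i))))"
  proof -
    have "of_nat c * (P * a ^ Suc i * b ^ (m - i)) = P * (a * (of_nat c * (a ^ i * b ^ (m - i))))"
      for c i
    proof -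
      have "of_nat c * (P * a ^ Suc i * b ^ (m - i)) = P * a * (a ^ i * b ^ (m - i)) * of_nat c"
        using mult_of_nat_commute[of c "P * a * (a ^ i * b ^ (m - i))"] by (simp add: mult.assoc)
      also have "\<dots> = P * (a * (of_nat c * (a ^ i * b ^ (m - i))))"
        by (simp add: mult.assoc mult_of_nat_commute[of c "a ^ i * b ^ (m - i)"])
      finally show ?thesis .
    qed
    then show ?thesis unfolding sum_distrib_left by (simp only:)
  qed
  finally show ?thesis .
qed

lemma commuting_prefix_power_cong:
  assumes P: "P \<in> commuting_prefixes" and "g \<in> ring_ab"
    and eq: "\<And>u. u \<in> ring_ab \<Longrightarrow> P * u * f = P * u * g"
  shows "P * f ^ j = P * g ^ j"
proof (induction j)
  case (Suc j)
  have "P * f ^ Suc j = P * f ^ j * f" by (simp only: power_Suc2 mult.assoc)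
  also have "\<dots> = P * g ^ j * f" by (simp only: Suc)
  also have "\<dots> = P * g ^ j * g" by (rule eq[OF ring_ab_power[OF \<open>g \<in> ring_ab\<close>]])
  finally show ?case by (simp only: power_Suc2 mult.assoc)
qed simp

end

locale normed_word_commuting = word_commuting a b k for a b :: "'a::real_normed_algebra_1" and k
begin

lemma norm_commuting_prefix_binomial_le:
  assumes P: "P \<in> commuting_prefixes"
    and ring: "s \<in> ring_ab" "\<beta> \<in> ring_ab" "\<gamma> \<in> ring_ab" "r \<in> ring_ab"
  shows "norm (P * (s * \<beta> + \<gamma> * r) ^ j) \<le> norm P *
    (\<Sum>i\<le>j. real (j choose i) * ((norm (s ^ i) * norm \<beta> ^ i) * (norm \<gamma> ^ (j - i) * norm (r ^ (j - i)))))"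
proof -
  have summand_bound: "norm (P * (s * \<beta>) ^ i * (\<gamma> * r) ^ m)
      \<le> norm P * ((norm (s ^ i) * norm \<beta> ^ i) * (norm \<gamma> ^ m * norm (r ^ m)))" for i m
  proof -
    have "P * (s * \<beta>) ^ i \<in> commuting_prefixes"
      using P ring by (intro commuting_prefixes_mult_right ring_ab_power ring_ab_mult)
    then have "P * (s * \<beta>) ^ i * (\<gamma> * r) ^ m = P * (s * \<beta>) ^ i * \<gamma> ^ m * r ^ m"
      using ring(3,4) by (rule commuting_prefix_power_mult)
    also have "\<dots> = P * (s ^ i * \<beta> ^ i) * (\<gamma> ^ m * r ^ m)"
      using commuting_prefix_power_mult[OF P ring(1,2)] by (simp add: mult.assoc)
    also have "norm \<dots> \<le> norm P * (norm (s ^ i) * norm \<beta> ^ i) * (norm \<gamma> ^ m * norm (r ^ m))"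
      by (intro order_trans[OF norm_mult_ineq] mult_mono order_trans[OF norm_power_ineq]
          norm_mult_ineq mult_left_mono mult_right_mono) auto
    finally show ?thesis by (simp add: mult.assoc)
  qed
  have "norm (P * (s * \<beta> + \<gamma> * r) ^ j)
      \<le> (\<Sum>i\<le>j. real (j choose i) * norm (P * (s * \<beta>) ^ i * (\<gamma> * r) ^ (j - i)))"
    unfolding commuting_prefix_binomial[OF P ring_ab_mult[OF ring(1,2)] ring_ab_mult[OF ring(3,4)]]
    by (intro order_trans[OF norm_sum] sum_mono order_trans[OF norm_mult_ineq]) simp
  also have "\<dots> \<le> (\<Sum>i\<le>j. real (j choose i) * (norm P *
      ((norm (s ^ i) * norm \<beta> ^ i) * (norm \<gamma> ^ (j - i) * norm (r ^ (j - i))))))"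
    by (intro sum_mono mult_left_mono summand_bound) simp
  finally show ?thesis by (simp add: sum_distrib_left mult_ac)
qed

lemma topologically_nilpotent_decomposition:
  assumes ring: "u \<in> ring_ab" "v \<in> ring_ab" "s \<in> ring_ab" "\<beta> \<in> ring_ab" "\<gamma> \<in> ring_ab" "r \<in> ring_ab"
    and tn: "topologically_nilpotent s" "topologically_nilpotent r"
    and eq: "\<And>P w. P \<in> commuting_prefixes \<Longrightarrow> w \<in> ring_ab \<Longrightarrow>
      P * w * (a * u + b * v) = P * w * (s * \<beta> + \<gamma> * r)"
  shows "topologically_nilpotent (a * u + b * v)"
proof -
  define f where "f = a * u + b * v"
  define A where "A i = norm (s ^ i) * norm \<beta> ^ i" for i
  define B where "B m = norm \<gamma> ^ m * norm (r ^ m)" for m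
  have P: "f ^ k \<in> commuting_prefixes" unfolding f_def by (rule power_commuting_prefix[OF ring(1,2)])
  have sA: "subexponential A" unfolding A_def
    using tn(1) unfolding topologically_nilpotent_def
    by (rule subexponential_le_power_mult[of _ "norm \<beta>"]) (auto simp: mult_ac)
  have sB: "subexponential B" unfolding B_def
    using tn(2) unfolding topologically_nilpotent_def
    by (rule subexponential_le_power_mult[of _ "norm \<gamma>"]) auto
  have "subexponential (\<lambda>j. norm (f ^ k) * (\<Sum>i\<le>j. real (j choose i) * (A i * B (j - i))))"
    by (intro subexponential_cmult subexponential_binomial_convolution sA sB) (simp_all add: A_def B_def)
  then have "subexponential (\<lambda>j. norm (f ^ (k + j)))"
  proof (rule subexponential_le)
    fix j
    have "f ^ (k + j) = f ^ k * (s * \<beta> + \<gamma> * r) ^ j"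
      using commuting_prefix_power_cong[OF P _ eq[OF P]] ring by (simp add: power_add f_def ring_ab.intros ring_ab_mult)
    then show "norm (f ^ (k + j)) \<le> norm (f ^ k) * (\<Sum>i\<le>j. real (j choose i) * (A i * B (j - i)))"
      using norm_commuting_prefix_binomial_le[OF P ring(3-6), of j] by (simp add: A_def B_def)
  qed
  then show ?thesis unfolding topologically_nilpotent_def f_def[symmetric]
    by (rule subexponential_shift) simp
qed

lemma topologically_nilpotent_mult_if_left: "topologically_nilpotent a \<Longrightarrow> topologically_nilpotent (a * b)"
  using topologically_nilpotent_decomposition[of b 0 a b 0 0] ring_ab_a ring_ab_b ring_ab_0
    topologically_nilpotent_0 by simp

lemma topologically_nilpotent_mult_if_right: "topologically_nilpotent b \<Longrightarrow> topologically_nilpotent (a * b)"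
  using topologically_nilpotent_decomposition[of b 0 0 0 a b] ring_ab_a ring_ab_b ring_ab_0
    topologically_nilpotent_0 by simp

lemma topologically_nilpotent_add:
  "topologically_nilpotent a \<Longrightarrow> topologically_nilpotent b \<Longrightarrow> topologically_nilpotent (a + b)"
  using topologically_nilpotent_decomposition[of 1 1 a 1 1 b] ring_ab_a ring_ab_b ring_ab.one by simp

lemma topologically_nilpotent_add_cancel:
  assumes "topologically_nilpotent a" "topologically_nilpotent (a + b)"
  shows "topologically_nilpotent b"
  using topologically_nilpotent_decomposition[of 0 1 "a + b" 1 1 "- a"] assms
    topologically_nilpotent_minus[OF assms(1)] ring_ab_a ring_ab_b ring_ab_0 ring_ab.one
    ring_ab.add ring_ab.minus
  by simp


lemma topologically_nilpotent_diff_power_mult: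
  assumes "n > 0" "topologically_nilpotent (a - a ^ (n + 1))"
    and "m > 0" "topologically_nilpotent (b - b ^ (m + 1))"
  shows "topologically_nilpotent (a * b - (a * b) ^ (n * m + 1))"
proof -
  have "topologically_nilpotent (b - b ^ (m * n + 1))"
    using assms(4) by (rule topologically_nilpotent_diff_power_multiple)
  moreover have "topologically_nilpotent (a - a ^ (n * m + 1))"
    using assms(2) by (rule topologically_nilpotent_diff_power_multiple)
  ultimately have tn: "topologically_nilpotent (a - a ^ (n * m + 1))"
    "topologically_nilpotent (b - b ^ (n * m + 1))"
    unfolding mult.commute[of m n] by simp_all
  have f_eq: "a * (b - b * (a * b) ^ (n * m)) + b * 0 = a * b - (a * b) ^ (n * m + 1)"
    by (simp add: right_diff_distrib mult.assoc)
  have "topologically_nilpotent (a * (b - b * (a * b) ^ (n * m)) + b * 0)"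
  proof (rule topologically_nilpotent_decomposition[OF _ ring_ab_0 _ ring_ab_b _ _ tn])
    fix P w assume "P \<in> commuting_prefixes" "w \<in> ring_ab"
    then have "P * w \<in> commuting_prefixes" by (rule commuting_prefixes_mult_right)
    then have "P * w * (a * b) ^ (n * m + 1) = P * w * a ^ (n * m + 1) * b ^ (n * m + 1)"
      by (rule commuting_prefix_power_mult[OF _ ring_ab_a ring_ab_b])
    then show "P * w * (a * (b - b * (a * b) ^ (n * m)) + b * 0)
        = P * w * ((a - a ^ (n * m + 1)) * b + a ^ (n * m + 1) * (b - b ^ (n * m + 1)))"
      unfolding f_eq by (simp add: algebra_simps)
  qed (intro ring_ab_diff ring_ab_mult ring_ab_power ring_ab_a ring_ab_b)+
  then show ?thesis unfolding f_eq .
qed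

lemma topologically_nilpotent_diff_power_add:
  assumes "topologically_nilpotent a" "topologically_nilpotent (b - b ^ (m + 1))"
  shows "topologically_nilpotent ((a + b) - (a + b) ^ (m + 1))"
proof -
  define W where "W = (\<Sum>i\<le>m. of_nat (Suc m choose Suc i) * (a ^ i * b ^ (m - i)))"
  have W: "W \<in> ring_ab"
    unfolding W_def by (intro ring_ab_sum ring_ab_mult ring_ab_of_nat ring_ab_power ring_ab_a ring_ab_b)
  have f_eq: "a * (1 - (a + b) ^ m) + b * (1 - (a + b) ^ m) = (a + b) - (a + b) ^ (m + 1)"
    by (simp add: algebra_simps)
  have "topologically_nilpotent (a * (1 - (a + b) ^ m) + b * (1 - (a + b) ^ m))"
  proof (rule topologically_nilpotent_decomposition[OF _ _ ring_ab_a _ ring_ab.one _ assms])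
    fix P w assume "P \<in> commuting_prefixes" "w \<in> ring_ab"
    then have "P * w \<in> commuting_prefixes" by (rule commuting_prefixes_mult_right)
    from commuting_prefix_binomial_split[OF this, of m]
    show "P * w * (a * (1 - (a + b) ^ m) + b * (1 - (a + b) ^ m))
        = P * w * (a * (1 - W) + 1 * (b - b ^ (m + 1)))"
      unfolding f_eq W_def[symmetric] by (simp add: algebra_simps)
  qed (intro ring_ab_diff ring_ab_power ring_ab.add ring_ab.one ring_ab_a ring_ab_b W)+
  then show ?thesis unfolding f_eq .
qed
end


theorem lemma3p9:
  fixes a b :: "'a::complex_banach_algebra_1" and k :: nat
  assumes "k > 0"
    and "\<forall>\<alpha>s. length \<alpha>s = k \<and> set \<alpha>s \<subseteq> {a, b} \<longrightarrow>
           prod_list \<alpha>s * a * b = prod_list \<alpha>s * b * a"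
  shows "((quasinilpotent a \<or> quasinilpotent b) \<longrightarrow> quasinilpotent (a * b))
       \<and> (quasinilpotent a \<longrightarrow> (quasinilpotent b \<longleftrightarrow> quasinilpotent (a + b)))
       \<and> (gpi_Hirano_invertible a \<and> gpi_Hirano_invertible b \<longrightarrow> gpi_Hirano_invertible (a * b))
       \<and> (quasinilpotent a \<and> gpi_Hirano_invertible b \<longrightarrow> gpi_Hirano_invertible (a + b))"
proof -
  interpret normed_word_commuting a b k
    using assms(2) by unfold_locales blast
  note QN = quasinilpotent_iff_topologically_nilpotent
  note Hirano = gpi_Hirano_invertible_iff_topologically_nilpotent
  show ?thesis
  proof (intro conjI impI)
    show "quasinilpotent (a * b)" if "quasinilpotent a \<or> quasinilpotent b"
      using that topologically_nilpotent_mult_if_left topologically_nilpotent_mult_if_right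
      unfolding QN by blast
    show "quasinilpotent b \<longleftrightarrow> quasinilpotent (a + b)" if "quasinilpotent a"
      using that topologically_nilpotent_add topologically_nilpotent_add_cancel unfolding QN by blast
  next
    assume "gpi_Hirano_invertible a \<and> gpi_Hirano_invertible b"
    then obtain n m where n: "n > 0" "topologically_nilpotent (a - a ^ (n + 1))"
      and m: "m > 0" "topologically_nilpotent (b - b ^ (m + 1))"
      unfolding Hirano by blast
    then have "topologically_nilpotent (a * b - (a * b) ^ (n * m + 1))" "n * m > 0"
      using topologically_nilpotent_diff_power_mult[OF n m] by simp_all
    then show "gpi_Hirano_invertible (a * b)" unfolding Hirano by blast
  next
    assume "quasinilpotent a \<and> gpi_Hirano_invertible b"
    then obtain m where "m > 0" "topologically_nilpotent a" "topologically_nilpotent (b - b ^ (m + 1))"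
      unfolding Hirano QN by blast
    then show "gpi_Hirano_invertible (a + b)"
      unfolding Hirano using topologically_nilpotent_diff_power_add by blast
  qed
qed

end
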